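(* Let $X$ be a compact metric space and $f\colon X\to X$ a continuous map with the shadowing property. If $\dim X=0$ and $h_{top}(f)>0$, then there is a chain component $C\in\mathcal{C}(f)$ such that $f|_C\colon C\to C$ has the shadowing property and $h_{top}(f|_C)>0$.
   Context: A $\delta$-chain of $f$ is a finite sequence $(x_i)_{i=0}^k$, $k>0$, with $d(f(x_i),x_{i+1})\le\delta$ for all $0\le i<k$; write $x\to_{f,\delta}y$ if such a chain exists with $x_0=x$, $x_k=y$. $CR(f)=\{x: x\to_{f,\delta}x\ \forall\delta>0\}$. For $x,y\in CR(f)$, $x\leftrightarrow_f y$ iff $x\to_{f,\delta}y$ and $y\to_{f,\delta}x$ for all $\delta>0$; the equivalence classes (chain components) are closed $f$-invariant sets, and $\mathcal{C}(f)$ denotes the set of chain components. Shadowing property: for every $\epsilon>0$ there is $\delta>0$ such that every sequence $(x_i)_{i\ge0}$ with $d(f(x_i),x_{i+1})\le\delta$ for all $i$ is $\epsilon$-shadowed by some $x$, i.e., $d(f^i(x),x_i)\le\epsilon$ for all $i$. $h_{top}$ is topological entropy. *)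

theory Defs
  imports "HOL-Analysis.Analysis"
begin

definition delta_chain_rel :: "('a::metric_space \<Rightarrow> 'a) \<Rightarrow> 'a set \<Rightarrow> real \<Rightarrow> 'a \<Rightarrow> 'a \<Rightarrow> bool" where
  "delta_chain_rel f X \<delta> x y \<longleftrightarrow>
     (\<exists>k::nat. k > 0 \<and> (\<exists>xs::nat \<Rightarrow> 'a. xs 0 = x \<and> xs k = y \<and> (\<forall>i\<le>k. xs i \<in> X)
        \<and> (\<forall>i<k. dist (f (xs i)) (xs (Suc i)) \<le> \<delta>)))"

definition chain_recurrent_set :: "('a::metric_space \<Rightarrow> 'a) \<Rightarrow> 'a set \<Rightarrow> 'a set" where
  "chain_recurrent_set f X = {x \<in> X. \<forall>\<delta>>0. delta_chain_rel f X \<delta> x x}"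

definition chain_equiv :: "('a::metric_space \<Rightarrow> 'a) \<Rightarrow> 'a set \<Rightarrow> 'a \<Rightarrow> 'a \<Rightarrow> bool" where
  "chain_equiv f X x y \<longleftrightarrow> x \<in> chain_recurrent_set f X \<and> y \<in> chain_recurrent_set f X \<and>
     (\<forall>\<delta>>0. delta_chain_rel f X \<delta> x y \<and> delta_chain_rel f X \<delta> y x)"

definition chain_components :: "('a::metric_space \<Rightarrow> 'a) \<Rightarrow> 'a set \<Rightarrow> 'a set set" where
  "chain_components f X = {{y. chain_equiv f X x y} | x. x \<in> chain_recurrent_set f X}"

definition shadowing :: "('a::metric_space \<Rightarrow> 'a) \<Rightarrow> 'a set \<Rightarrow> bool" where
  "shadowing f X \<longleftrightarrow>
     (\<forall>\<epsilon>>0. \<exists>\<delta>>0. \<forall>xs::nat \<Rightarrow> 'a. (\<forall>i. xs i \<in> X) \<and> (\<forall>i. dist (f (xs i)) (xs (Suc i)) \<le> \<delta>)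
        \<longrightarrow> (\<exists>x\<in>X. \<forall>i. dist ((f ^^ i) x) (xs i) \<le> \<epsilon>))"

definition zero_dimensional :: "'a::metric_space set \<Rightarrow> bool" where
  "zero_dimensional X \<longleftrightarrow>
     (\<forall>x\<in>X. \<forall>e>0. \<exists>U. x \<in> U \<and> U \<subseteq> ball x e \<and>
        openin (top_of_set X) U \<and> closedin (top_of_set X) U)"

text \<open>Topological entropy (Bowen, via (n,eps)-separated sets) of f restricted to K.\<close>
definition separated_set :: "('a::metric_space \<Rightarrow> 'a) \<Rightarrow> 'a set \<Rightarrow> nat \<Rightarrow> real \<Rightarrow> 'a set \<Rightarrow> bool" where
  "separated_set f K n \<epsilon> E \<longleftrightarrow> E \<subseteq> K \<and>
     (\<forall>x\<in>E. \<forall>y\<in>E. x \<noteq> y \<longrightarrow> (\<exists>i<n. dist ((f ^^ i) x) ((f ^^ i) y) > \<epsilon>))"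

text \<open>Maximal cardinality of an (n,eps)-separated subset of K (finite for compact K).\<close>
definition max_sep :: "('a::metric_space \<Rightarrow> 'a) \<Rightarrow> 'a set \<Rightarrow> nat \<Rightarrow> real \<Rightarrow> real" where
  "max_sep f K n \<epsilon> = Sup {real (card E) | E. finite E \<and> separated_set f K n \<epsilon> E}"

definition htop :: "('a::metric_space \<Rightarrow> 'a) \<Rightarrow> 'a set \<Rightarrow> ereal" where
  "htop f K = (SUP \<epsilon> \<in> {0<..}. limsup (\<lambda>n. ereal (ln (max_sep f K n \<epsilon>) / real n)))"

end

theory Submission
  imports Defs "HOL-Real_Asymp.Real_Asymp"
begin

section \<open>Finite clopen partitions\<close>

text \<open>A finite partition of \<open>X\<close> into relatively open (hence clopen) cells, encoded by the
  map sending each point to its cell.\<close>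
definition clopen_partition :: "'a::metric_space set \<Rightarrow> ('a \<Rightarrow> 'a set) \<Rightarrow> bool" where
  "clopen_partition X c \<longleftrightarrow>
     (\<forall>x\<in>X. x \<in> c x \<and> c x \<subseteq> X \<and> openin (top_of_set X) (c x) \<and> (\<forall>y\<in>c x. c y = c x)) \<and>
     finite (c ` X)"

lemma clopen_partitionD:
  assumes "clopen_partition X c" "x \<in> X"
  shows "x \<in> c x" "c x \<subseteq> X" "openin (top_of_set X) (c x)" "y \<in> c x \<Longrightarrow> c y = c x"
    "finite (c ` X)"
  using assms unfolding clopen_partition_def by blast+

lemma clopen_partition_closedin:
  assumes "clopen_partition X c" "x \<in> X"
  shows "closedin (top_of_set X) (c x)"
proof -
  have "X - c x = (\<Union>y\<in>X - c x. c y)"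
  proof
    show "X - c x \<subseteq> (\<Union>y\<in>X - c x. c y)"
      using clopen_partitionD(1)[OF assms(1)] by blast
    show "(\<Union>y\<in>X - c x. c y) \<subseteq> X - c x"
    proof
      fix z
      assume "z \<in> (\<Union>y\<in>X - c x. c y)"
      then obtain y where y: "y \<in> X" "y \<notin> c x" "z \<in> c y"
        by blast
      then have "c z = c y" "z \<in> X"
        using clopen_partitionD(2,4)[OF assms(1) y(1)] by auto
      moreover have "z \<notin> c x"
        using clopen_partitionD(1,4)[OF assms] clopen_partitionD(1)[OF assms(1) y(1)] y(2) calculation
        by metis
      ultimately show "z \<in> X - c x"
        by blast
    qed
  qed
  moreover have "openin (top_of_set X) (\<Union>y\<in>X - c x. c y)"
    using clopen_partitionD(3)[OF assms(1)] by auto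
  ultimately show ?thesis
    using clopen_partitionD(2)[OF assms] by (simp add: closedin_def)
qed

lemma clopen_partition_closed:
  assumes "clopen_partition X c" "x \<in> X" "compact X"
  shows "closed (c x)"
  using clopen_partition_closedin[OF assms(1,2)] assms(3) closedin_closed_trans compact_imp_closed
  by blast

lemma clopen_partition_Int:
  assumes "clopen_partition X c" "clopen_partition X d"
  shows "clopen_partition X (\<lambda>x. c x \<inter> d x)"
proof -
  have "(\<lambda>x. c x \<inter> d x) ` X \<subseteq> (\<lambda>(A, B). A \<inter> B) ` (c ` X \<times> d ` X)"
    by force
  moreover have "finite (c ` X)" "finite (d ` X)"
    using assms unfolding clopen_partition_def by blast+
  ultimately have "finite ((\<lambda>x. c x \<inter> d x) ` X)"
    by (meson finite_SigmaI finite_imageI finite_subset)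
  moreover have "x \<in> c x \<inter> d x \<and> c x \<inter> d x \<subseteq> X \<and> openin (top_of_set X) (c x \<inter> d x) \<and>
      (\<forall>y\<in>c x \<inter> d x. c y \<inter> d y = c x \<inter> d x)" if "x \<in> X" for x
    using clopen_partitionD[OF assms(1) that] clopen_partitionD[OF assms(2) that] by blast
  ultimately show ?thesis
    unfolding clopen_partition_def by blast
qed

lemma clopen_partition_Lebesgue:
  assumes "clopen_partition X c" "compact X"
  shows "\<exists>\<eta>>0. \<forall>x\<in>X. \<forall>y\<in>X. dist x y < \<eta> \<longrightarrow> y \<in> c x"
proof (cases "X = {}")
  case True
  then show ?thesis by (intro exI[of _ 1]) auto
next
  case False
  have "\<forall>x\<in>X. \<exists>T. open T \<and> c x = X \<inter> T"
    using clopen_partitionD(3)[OF assms(1)] openin_open by (metis inf_commute)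
  then obtain T where T: "\<And>x. x \<in> X \<Longrightarrow> open (T x) \<and> c x = X \<inter> T x"
    by metis
  have cover: "X \<subseteq> \<Union>(T ` X)"
    using T clopen_partitionD(1)[OF assms(1)] by blast
  obtain \<delta> where \<delta>: "0 < \<delta>" "\<And>S. S \<subseteq> X \<Longrightarrow> diameter S < \<delta> \<Longrightarrow> \<exists>B \<in> T ` X. S \<subseteq> B"
    using Lebesgue_number_lemma[OF assms(2) _ cover] False T by blast
  show ?thesis
  proof (intro exI[of _ \<delta>] conjI \<delta>(1) ballI impI)
    fix x y
    assume xy: "x \<in> X" "y \<in> X" "dist x y < \<delta>"
    have "diameter {x, y} \<le> dist x y"
    proof -
      have "(SUP (a, b)\<in>{x, y} \<times> {x, y}. dist a b) \<le> dist x y"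
        by (rule cSUP_least) (auto simp: dist_commute)
      then show ?thesis
        unfolding diameter_def by simp
    qed
    then obtain z where z: "z \<in> X" "{x, y} \<subseteq> T z"
      using \<delta>(2)[of "{x, y}"] xy by fastforce
    then have "x \<in> c z" "y \<in> c z"
      using T xy by auto
    then show "y \<in> c x"
      using clopen_partitionD(4)[OF assms(1) z(1)] by auto
  qed
qed

text \<open>The atoms of the Boolean algebra generated by finitely many clopen sets.\<close>
lemma clopen_partition_generated:
  assumes "finite t"
    and clopen: "\<And>i. i \<in> t \<Longrightarrow> openin (top_of_set X) (U i) \<and> closedin (top_of_set X) (U i)"
  shows "clopen_partition X (\<lambda>x. {y\<in>X. \<forall>i\<in>t. x \<in> U i \<longleftrightarrow> y \<in> U i})"
    (is "clopen_partition X ?c")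
proof -
  have "openin (top_of_set X) (?c x)" for x
  proof -
    define V where "V i = (if x \<in> U i then U i else X - U i)" for i
    have "?c x = (\<Inter>i\<in>t. V i) \<inter> topspace (top_of_set X)"
      unfolding V_def by (auto split: if_splits)
    moreover have "openin (top_of_set X) ((\<Inter>i\<in>t. V i) \<inter> topspace (top_of_set X))"
      using clopen unfolding V_def closedin_def by (intro openin_INT[OF assms(1)]) auto
    ultimately show ?thesis by simp
  qed
  moreover have "?c ` X \<subseteq> (\<lambda>S. {y\<in>X. \<forall>i\<in>t. i \<in> S \<longleftrightarrow> y \<in> U i}) ` Pow t"
  proof
    fix A
    assume "A \<in> ?c ` X"
    then obtain x where "x \<in> X" "A = ?c x"
      by blast
    then have "A = (\<lambda>S. {y\<in>X. \<forall>i\<in>t. i \<in> S \<longleftrightarrow> y \<in> U i}) {i\<in>t. x \<in> U i}"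
      by auto
    then show "A \<in> (\<lambda>S. {y\<in>X. \<forall>i\<in>t. i \<in> S \<longleftrightarrow> y \<in> U i}) ` Pow t"
      by blast
  qed
  then have "finite (?c ` X)"
    using assms(1) by (meson finite_Pow_iff finite_imageI finite_subset)
  ultimately show ?thesis
    unfolding clopen_partition_def by auto
qed

lemma zero_dimensional_fine_clopen_partition:
  assumes "compact X" "zero_dimensional X" "e > 0"
  obtains c where "clopen_partition X c" "\<And>x y. x \<in> X \<Longrightarrow> y \<in> c x \<Longrightarrow> dist x y < e"
proof -
  have "\<forall>x\<in>X. \<exists>U. x \<in> U \<and> U \<subseteq> ball x (e/2) \<and>
      openin (top_of_set X) U \<and> closedin (top_of_set X) U"
    using assms(2,3) unfolding zero_dimensional_def by (meson half_gt_zero)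
  then obtain U where U: "\<And>x. x \<in> X \<Longrightarrow> x \<in> U x \<and> U x \<subseteq> ball x (e/2) \<and>
      openin (top_of_set X) (U x) \<and> closedin (top_of_set X) (U x)"
    by metis
  then have "\<forall>x\<in>X. \<exists>T. open T \<and> U x = X \<inter> T"
    using openin_open by (metis inf_commute)
  then obtain T where T: "\<And>x. x \<in> X \<Longrightarrow> open (T x) \<and> U x = X \<inter> T x"
    by metis
  have "X \<subseteq> (\<Union>x\<in>X. T x)"
    using U T by blast
  then obtain t where t: "t \<subseteq> X" "finite t" "X \<subseteq> (\<Union>i\<in>t. T i)"
    using compactE_image[OF assms(1), of X T] T by blast
  define c where "c x = {y\<in>X. \<forall>i\<in>t. x \<in> U i \<longleftrightarrow> y \<in> U i}" for x
  have "clopen_partition X c"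
    unfolding c_def using t U by (intro clopen_partition_generated) auto
  moreover have "dist x y < e" if xy: "x \<in> X" "y \<in> c x" for x y
  proof -
    obtain i where i: "i \<in> t" "x \<in> U i"
      using t T xy(1) by blast
    then have "y \<in> U i"
      using xy(2) unfolding c_def by auto
    moreover have "U i \<subseteq> ball i (e/2)"
      using U[of i] i t(1) by blast
    ultimately have "dist i x < e/2" "dist i y < e/2"
      using i(2) by auto
    then show ?thesis
      by (metis dist_commute dist_triangle_half_r)
  qed
  ultimately show ?thesis
    using that by blast
qed


section \<open>Walks in finite graphs\<close>

lemma length_concat_ge:
  assumes "\<And>n. B n \<noteq> []"
  shows "n \<le> length (concat (map B [0..<n]))"
proof (induction n)
  case (Suc n)
  then show ?case
    using assms[of n] by (cases "B n") auto
qed simp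

lemma walk_of_blocks:
  fixes B :: "nat \<Rightarrow> 'b list"
  assumes nonempty: "\<And>n. B n \<noteq> []" and linked: "\<And>n. successively E (B n @ [hd (B (Suc n))])"
  obtains T where "\<And>i. E (T i) (T (Suc i))" "\<And>i. \<exists>n. T i \<in> set (B n)"
    "\<And>n i. i < length (B n) \<Longrightarrow> T (length (concat (map B [0..<n])) + i) = B n ! i"
proof -
  define Pre where "Pre n = concat (map B [0..<n])" for n
  have Pre_Suc: "Pre (Suc n) = Pre n @ B n" for n
    unfolding Pre_def by simp
  have Pre_prefix: "\<exists>r. Pre m = Pre n @ r" if "n \<le> m" for n m
    using that
  proof (induction m rule: dec_induct)
    case (step k)
    then show ?case
      using Pre_Suc by (metis append.assoc)
  qed simp
  have Pre_length: "length (Pre n) \<ge> n" for n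
    unfolding Pre_def using length_concat_ge[OF nonempty] .
  have Pre_linked: "successively E (Pre n @ [hd (B n)])" for n
  proof (induction n)
    case 0
    then show ?case
      unfolding Pre_def by simp
  next
    case (Suc n)
    then have "successively E (Pre n)" "Pre n = [] \<or> E (last (Pre n)) (hd (B n))"
      unfolding successively_append_iff by auto
    then have "successively E (Pre n @ (B n @ [hd (B (Suc n))]))"
      using linked[of n] nonempty[of n] unfolding successively_append_iff[of E "Pre n"] by simp
    then show ?case
      by (simp add: Pre_Suc)
  qed
  define T where "T i = Pre (Suc i) ! i" for i
  have T_nth: "T i = Pre m ! i" if "i < length (Pre m)" for i m
  proof (cases "Suc i \<le> m")
    case True
    then obtain r where "Pre m = Pre (Suc i) @ r"
      using Pre_prefix by blast
    moreover have "i < length (Pre (Suc i))"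
      using Pre_length[of "Suc i"] by simp
    ultimately show ?thesis
      unfolding T_def by (simp add: nth_append)
  next
    case False
    then obtain r where "Pre (Suc i) = Pre m @ r"
      using Pre_prefix by (metis nat_le_linear)
    then show ?thesis
      unfolding T_def using that by (simp add: nth_append)
  qed
  have "E (T i) (T (Suc i))" for i
  proof -
    have l: "Suc i < length (Pre (Suc (Suc i)))"
      using Pre_length[of "Suc (Suc i)"] by simp
    then have "E ((Pre (Suc (Suc i)) @ [hd (B (Suc (Suc i)))]) ! i)
        ((Pre (Suc (Suc i)) @ [hd (B (Suc (Suc i)))]) ! Suc i)"
      using successively_nth[OF Pre_linked] by simp
    then show ?thesis
      using T_nth[of i "Suc (Suc i)"] T_nth[of "Suc i" "Suc (Suc i)"] l by (simp add: nth_append)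
  qed
  moreover have "\<exists>n. T i \<in> set (B n)" for i
  proof -
    have "i < length (Pre (Suc i))"
      using Pre_length[of "Suc i"] by simp
    then have "T i \<in> set (Pre (Suc i))"
      unfolding T_def by simp
    then show ?thesis
      unfolding Pre_def by auto
  qed
  moreover have "T (length (Pre n) + i) = B n ! i" if "i < length (B n)" for n i
    using T_nth[of "length (Pre n) + i" "Suc n"] that by (simp add: Pre_Suc nth_append)
  ultimately show ?thesis
    using that unfolding Pre_def by blast
qed

text \<open>Enumerate all finite walks, each one infinitely often, and join consecutive ones by
  connecting walks.\<close>
lemma universal_walk:
  fixes V :: "'b set" and E :: "'b \<Rightarrow> 'b \<Rightarrow> bool"
  assumes "finite V" "V \<noteq> {}"
    and connected: "\<And>A B. A \<in> V \<Longrightarrow> B \<in> V \<Longrightarrow> \<exists>c. set c \<subseteq> V \<and> successively E (A # c @ [B])"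
  obtains T where "\<And>i. T i \<in> V" "\<And>i. E (T i) (T (Suc i))"
    "\<And>w N. w \<noteq> [] \<Longrightarrow> set w \<subseteq> V \<Longrightarrow> successively E w \<Longrightarrow> \<exists>p\<ge>N. \<forall>i<length w. T (p + i) = w ! i"
proof -
  define P where "P = {w. w \<noteq> [] \<and> set w \<subseteq> V \<and> successively E w}"
  obtain v where "v \<in> V"
    using assms(2) by blast
  then have "[v] \<in> P"
    unfolding P_def by simp
  then have P: "P \<noteq> {}"
    by blast
  have "countable P"
  proof (rule countable_subset)
    show "P \<subseteq> lists V"
      unfolding P_def by auto
    show "countable (lists V)"
      using assms(1) by (simp add: countable_finite)
  qed
  define e where "e n = from_nat_into P (fst (prod_decode n))" for n
  have e: "e n \<noteq> []" "set (e n) \<subseteq> V" "successively E (e n)" for n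
    using from_nat_into[OF P] unfolding e_def P_def by auto
  have e_ends: "hd (e n) \<in> V" "last (e n) \<in> V" for n
    using e(1,2) hd_in_set last_in_set by blast+
  define c where "c n = (SOME c. set c \<subseteq> V \<and> successively E (last (e n) # c @ [hd (e (Suc n))]))" for n
  have c: "set (c n) \<subseteq> V \<and> successively E (last (e n) # c n @ [hd (e (Suc n))])" for n
    unfolding c_def by (rule someI_ex) (rule connected[OF e_ends(2) e_ends(1)])
  define B where "B n = e n @ c n" for n
  have B: "B n \<noteq> []" for n
    unfolding B_def using e by simp
  have linked: "successively E (B n @ [hd (B (Suc n))])" for n
  proof -
    have "successively E (c n @ [hd (e (Suc n))])"
      using c[of n] by (cases "c n @ [hd (e (Suc n))]") (auto simp: successively_Cons)
    moreover have "E (last (e n)) (hd (c n @ [hd (e (Suc n))]))"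
      using c[of n] by (cases "c n @ [hd (e (Suc n))]") (auto simp: successively_Cons)
    ultimately have "successively E (e n @ (c n @ [hd (e (Suc n))]))"
      using e(1,3)[of n] by (subst successively_append_iff) blast
    moreover have "B n @ [hd (B (Suc n))] = e n @ (c n @ [hd (e (Suc n))])"
      unfolding B_def using e(1) by simp
    ultimately show ?thesis
      by simp
  qed
  obtain T where T: "\<And>i. E (T i) (T (Suc i))" "\<And>i. \<exists>n. T i \<in> set (B n)"
    "\<And>n i. i < length (B n) \<Longrightarrow> T (length (concat (map B [0..<n])) + i) = B n ! i"
    using walk_of_blocks[of B E, OF B linked] by blast
  have in_V: "T i \<in> V" for i
  proof -
    obtain n where "T i \<in> set (e n @ c n)"
      using T(2)[of i] unfolding B_def by blast
    then show ?thesis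
      using e(2)[of n] c[of n] by auto
  qed
  have window: "\<exists>p\<ge>N. \<forall>i<length w. T (p + i) = w ! i"
    if w: "w \<noteq> []" "set w \<subseteq> V" "successively E w" for w N
  proof -
    obtain a where "from_nat_into P a = w"
      using from_nat_into_surj[OF \<open>countable P\<close>] w unfolding P_def by blast
    then have en: "e (prod_encode (a, N)) = w"
      unfolding e_def by simp
    have "N \<le> length (concat (map B [0..<prod_encode (a, N)]))"
      by (rule order_trans[OF le_prod_encode_2 length_concat_ge[OF B]])
    moreover have "T (length (concat (map B [0..<prod_encode (a, N)])) + i) = w ! i" if "i < length w" for i
      using T(3)[of i "prod_encode (a, N)"] that en unfolding B_def by (simp add: nth_append)
    ultimately show ?thesis
      by blast
  qed
  show ?thesis
    by (rule that[OF in_V T(1) window])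
qed

locale labelled_graph =
  fixes V :: "'v set" and E :: "'v \<Rightarrow> 'v \<Rightarrow> bool" and lab :: "'v \<Rightarrow> 'l"
  assumes finite_V: "finite V"
begin

definition walk :: "'v list \<Rightarrow> bool" where
  "walk p \<longleftrightarrow> p \<noteq> [] \<and> set p \<subseteq> V \<and> successively E p"

definition reachable :: "'v \<Rightarrow> 'v \<Rightarrow> bool" where
  "reachable a b \<longleftrightarrow> (\<exists>p. walk p \<and> hd p = a \<and> last p = b)"

definition unique_loop_labels :: bool where
  "unique_loop_labels \<longleftrightarrow> (\<forall>p q. walk p \<and> walk q \<and> length p = length q \<and> hd p = hd q \<and>
     last p = hd p \<and> last q = hd q \<longrightarrow> map lab p = map lab q)"

definition walk_words :: "'v \<Rightarrow> nat \<Rightarrow> 'l list set" where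
  "walk_words v n = map lab ` {p. walk p \<and> hd p = v \<and> length p = Suc n}"

lemma walk_append:
  "walk p \<Longrightarrow> walk q \<Longrightarrow> E (last p) (hd q) \<Longrightarrow> walk (p @ q)"
  unfolding walk_def by (auto simp: successively_append_iff)

lemma walk_take:
  assumes "walk p" "m > 0"
  shows "walk (take m p)"
  using assms set_take_subset[of m p] successively_append_iff[of E "take m p" "drop m p"]
  unfolding walk_def by auto

lemma walk_drop:
  assumes "walk p" "m < length p"
  shows "walk (drop m p)"
  using assms set_drop_subset[of m p] successively_append_iff[of E "take m p" "drop m p"]
  unfolding walk_def by auto

lemma walk_extend:
  assumes "walk p" "walk c" "hd c = last p"
  shows "walk (p @ tl c) \<and> hd (p @ tl c) = hd p \<and> last (p @ tl c) = last c"
proof (cases "tl c = []")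
  case True
  then have "c = [last p]"
    using assms(2,3) unfolding walk_def by (metis list.collapse)
  then show ?thesis
    using assms(1) unfolding walk_def by simp
next
  case False
  have "E (hd c) (hd (tl c))"
    using assms(2) False unfolding walk_def by (cases c; cases "tl c") (auto simp: successively_Cons)
  moreover have "walk (tl c)"
    using walk_drop[OF assms(2), of 1] False by (cases c) auto
  ultimately show ?thesis
    using walk_append[OF assms(1)] assms(1,3) False unfolding walk_def by (simp add: last_tl)
qed

lemma reachable_refl: "v \<in> V \<Longrightarrow> reachable v v"
  unfolding reachable_def walk_def by (intro exI[of _ "[v]"]) simp

lemma reachable_trans:
  assumes "reachable a b" "reachable b c"
  shows "reachable a c"
  using assms walk_extend unfolding reachable_def by metis

lemma reachable_in: "reachable a b \<Longrightarrow> a \<in> V \<and> b \<in> V"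
  unfolding reachable_def walk_def by auto

text \<open>Closing both walks by the same walk back to the start turns them into loops.\<close>
lemma walk_labels_eq_if_return:
  assumes unique_loop_labels "walk p" "walk q" "length p = length q" "hd p = hd q"
    "last p = last q" "reachable (last p) (hd p)"
  shows "map lab p = map lab q"
proof -
  obtain c where c: "walk c" "hd c = last p" "last c = hd p"
    using assms(7) unfolding reachable_def by blast
  have "walk (p @ tl c) \<and> hd (p @ tl c) = hd p \<and> last (p @ tl c) = hd p"
    using walk_extend[OF assms(2) c(1,2)] c(3) by simp
  moreover have "walk (q @ tl c) \<and> hd (q @ tl c) = hd p \<and> last (q @ tl c) = hd p"
    using walk_extend[OF assms(3) c(1)] c(2,3) assms(5,6) by simp
  ultimately have "map lab (p @ tl c) = map lab (q @ tl c)"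
    using assms(1)[unfolded unique_loop_labels_def, rule_format, of "p @ tl c" "q @ tl c"] assms(4)
    by simp
  then show ?thesis
    using assms(4) by simp
qed

definition canonical_word :: "'v \<Rightarrow> 'v \<Rightarrow> nat \<Rightarrow> 'l list" where
  "canonical_word v w l = map lab (SOME p. walk p \<and> hd p = v \<and> last p = w \<and> length p = Suc l)"

lemma canonical_word:
  assumes unique_loop_labels "walk p" "reachable (last p) (hd p)"
  shows "map lab p = canonical_word (hd p) (last p) (length p - 1)"
proof -
  define P where "P p' \<longleftrightarrow> walk p' \<and> hd p' = hd p \<and> last p' = last p \<and> length p' = Suc (length p - 1)"
    for p'
  have "P p"
    using assms(2) unfolding P_def walk_def by simp
  then have "P (SOME p'. P p')"
    by (rule someI)
  then have "map lab p = map lab (SOME p'. P p')"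
    using walk_labels_eq_if_return[OF assms(1,2)] assms(3) \<open>P p\<close> unfolding P_def by simp
  then show ?thesis
    unfolding canonical_word_def P_def .
qed

definition escape :: "'v \<Rightarrow> 'v set" where
  "escape v = {u\<in>V. reachable v u \<and> \<not> reachable u v}"

lemma finite_reachable: "finite {w. reachable v w}"
  using finite_V reachable_in by (metis (no_types, lifting) finite_subset mem_Collect_eq subsetI)

lemma card_reachable_escape_less:
  assumes "v \<in> V" "u \<in> escape v"
  shows "card {w. reachable u w} < card {w. reachable v w}"
proof -
  have "{w. reachable u w} \<subset> {w. reachable v w}"
    using assms reachable_trans reachable_refl unfolding escape_def by blast
  then show ?thesis
    using finite_reachable by (rule psubset_card_mono[rotated])
qed

text \<open>Cut a walk after the last vertex from which its start is still reachable.\<close>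
lemma walk_words_decompose:
  assumes unique_loop_labels "v \<in> V"
  shows "walk_words v n \<subseteq> (\<lambda>w. canonical_word v w n) ` V \<union>
    (\<Union>l<n. \<Union>w\<in>V. \<Union>u\<in>escape v. (\<lambda>s. canonical_word v w l @ s) ` walk_words u (n - Suc l))"
proof
  fix s
  assume "s \<in> walk_words v n"
  then obtain p where p: "walk p" "hd p = v" "length p = Suc n" "s = map lab p"
    unfolding walk_words_def by blast
  have p_in: "p ! i \<in> V" if "i \<le> n" for i
    using p(1,3) that unfolding walk_def by (metis le_imp_less_Suc nth_mem subsetD)
  define R where "R i \<longleftrightarrow> i \<le> n \<and> reachable (p ! i) v" for i
  define l where "l = Greatest R"
  have "R 0"
    unfolding R_def using reachable_refl[OF assms(2)] p(1,2) unfolding walk_def by (simp add: hd_conv_nth)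
  have R_bound: "R i \<Longrightarrow> i \<le> n" for i
    unfolding R_def by simp
  have l: "R l" "\<And>i. R i \<Longrightarrow> i \<le> l"
    unfolding l_def using GreatestI_nat[of R 0 n, OF \<open>R 0\<close> R_bound] Greatest_le_nat[of R _ n, OF _ R_bound] by auto
  have prefix: "map lab (take (Suc l) p) = canonical_word v (p ! l) l"
  proof -
    have "l < length p" "last (take (Suc l) p) = p ! l"
      using l(1) p(3) unfolding R_def by (auto simp: take_Suc_conv_app_nth)
    then show ?thesis
      using canonical_word[OF assms(1) walk_take[OF p(1)]] l(1) p(2) unfolding R_def by simp
  qed
  show "s \<in> (\<lambda>w. canonical_word v w n) ` V \<union>
    (\<Union>l<n. \<Union>w\<in>V. \<Union>u\<in>escape v. (\<lambda>s. canonical_word v w l @ s) ` walk_words u (n - Suc l))"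
  proof (cases "l = n")
    case True
    then show ?thesis
      using prefix p(3,4) p_in[of n] by simp
  next
    case False
    then have ln: "l < n"
      using l(1) unfolding R_def by simp
    define u where "u = p ! Suc l"
    have "walk (drop (Suc l) p)" "hd (drop (Suc l) p) = u" "length (drop (Suc l) p) = Suc (n - Suc l)"
      using walk_drop[OF p(1)] ln p(3) unfolding u_def by (auto simp: hd_drop_conv_nth)
    then have suffix: "map lab (drop (Suc l) p) \<in> walk_words u (n - Suc l)"
      unfolding walk_words_def by blast
    have "reachable v u"
    proof -
      have "walk (take (Suc (Suc l)) p)" "hd (take (Suc (Suc l)) p) = v"
        using walk_take[OF p(1)] p(2) by simp_all
      moreover have "last (take (Suc (Suc l)) p) = u"
        using p(3) ln unfolding u_def by (simp add: take_Suc_conv_app_nth)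
      ultimately show ?thesis
        unfolding reachable_def by blast
    qed
    moreover have "\<not> reachable u v"
    proof
      assume "reachable u v"
      then have "R (Suc l)"
        unfolding R_def u_def using ln by simp
      then show False
        using l(2)[of "Suc l"] by simp
    qed
    ultimately have "u \<in> escape v"
      unfolding escape_def u_def using p_in[of "Suc l"] ln by simp
    moreover have "s = canonical_word v (p ! l) l @ map lab (drop (Suc l) p)"
      using p(4) prefix by (metis append_take_drop_id map_append)
    then have "s \<in> (\<lambda>s. canonical_word v (p ! l) l @ s) ` walk_words u (n - Suc l)"
      using suffix by (rule image_eqI)
    ultimately have "s \<in> (\<Union>u\<in>escape v. (\<lambda>s. canonical_word v (p ! l) l @ s) ` walk_words u (n - Suc l))"
      by (rule UN_I)
    moreover have "p ! l \<in> V" "l \<in> {..<n}"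
      using p_in ln by simp_all
    ultimately show ?thesis
      by (intro UnI2 UN_I[of l "{..<n}"] UN_I[of "p ! l" V]) assumption+
  qed
qed

lemma finite_walk_words: "finite (walk_words v n)"
proof -
  have "{p. walk p \<and> hd p = v \<and> length p = Suc n} \<subseteq> {xs. set xs \<subseteq> V \<and> length xs = Suc n}"
    unfolding walk_def by blast
  then show ?thesis
    unfolding walk_words_def using finite_lists_length_eq[OF finite_V] finite_subset by blast
qed

lemma finite_label_words: "finite (map lab ` {p. walk p \<and> length p = n})"
proof -
  have "{p. walk p \<and> length p = n} \<subseteq> {xs. set xs \<subseteq> V \<and> length xs = n}"
    unfolding walk_def by blast
  then show ?thesis
    using finite_lists_length_eq[OF finite_V] finite_subset by blast
qed

lemma card_UN_le_mult:
  assumes "finite I" "\<And>i. i \<in> I \<Longrightarrow> card (A i) \<le> b"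
  shows "card (\<Union>i\<in>I. A i) \<le> card I * b"
  using card_UN_le[OF assms(1), of A] sum_bounded_above[of I "\<lambda>i. card (A i)" b] assms(2) by simp

text \<open>Without two distinct loop labellings, words grow polynomially; the degree is bounded by the
  number of vertices reachable from the start.\<close>
lemma card_walk_words_le:
  assumes unique_loop_labels "v \<in> V"
  shows "card (walk_words v n) \<le> ((card V + 1)^2 * (n + 1)) ^ card {w. reachable v w}"
  using assms(2)
proof (induction "card {w. reachable v w}" arbitrary: v n rule: less_induct)
  case less
  define N where "N = card V"
  define Q where "Q = (N + 1)^2 * (n + 1)"
  define r where "r = card {w. reachable v w}"
  have Q: "Q \<ge> 1"
    unfolding Q_def by (metis mult_le_mono le_add2 nat_mult_1 One_nat_def Suc_eq_plus1 one_le_power)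
  have "v \<in> {w. reachable v w}"
    using reachable_refl[OF less.prems] by simp
  then have r: "r \<ge> 1"
    unfolding r_def using finite_reachable[of v] by (metis One_nat_def Suc_leI card_gt_0_iff empty_iff)
  have escape: "finite (escape v)" "card (escape v) \<le> N"
    unfolding N_def escape_def using finite_V by (auto intro: card_mono)
  have escape_words: "card ((\<lambda>s. canonical_word v w l @ s) ` walk_words u (n - Suc l)) \<le> Q ^ (r - 1)"
    if u: "u \<in> escape v" for w l u
  proof -
    have "u \<in> V" "card {w. reachable u w} \<le> r - 1"
      using u card_reachable_escape_less[OF less.prems u] unfolding escape_def r_def by auto
    have "card ((\<lambda>s. canonical_word v w l @ s) ` walk_words u (n - Suc l)) \<le> card (walk_words u (n - Suc l))"
      by (rule card_image_le[OF finite_walk_words])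
    also have "\<dots> \<le> ((card V + 1)^2 * (n - Suc l + 1)) ^ card {w. reachable u w}"
      using less.hyps[OF card_reachable_escape_less[OF less.prems u] \<open>u \<in> V\<close>] .
    also have "\<dots> \<le> Q ^ card {w. reachable u w}"
      unfolding Q_def N_def by (intro power_mono) auto
    also have "\<dots> \<le> Q ^ (r - 1)"
      using \<open>card {w. reachable u w} \<le> r - 1\<close> Q by (rule power_increasing)
    finally show ?thesis .
  qed
  define A1 where "A1 = (\<lambda>w. canonical_word v w n) ` V"
  define A2 where "A2 = (\<Union>l<n. \<Union>w\<in>V. \<Union>u\<in>escape v. (\<lambda>s. canonical_word v w l @ s) ` walk_words u (n - Suc l))"
  have "card A2 \<le> card {..<n} * (card V * (card (escape v) * Q ^ (r - 1)))"
    unfolding A2_def by (intro card_UN_le_mult finite_lessThan finite_V escape(1) escape_words)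
  also have "\<dots> \<le> n * (N * (N * Q ^ (r - 1)))"
    using escape(2) unfolding N_def by (simp add: mult_le_mono)
  finally have A2: "card A2 \<le> n * (N * (N * Q ^ (r - 1)))" .
  have "finite A1" "finite A2"
    unfolding A1_def A2_def using finite_V escape(1) finite_walk_words by auto
  then have "card (walk_words v n) \<le> card (A1 \<union> A2)"
    using walk_words_decompose[OF assms(1) less.prems] unfolding A1_def A2_def by (intro card_mono) auto
  also have "\<dots> \<le> card A1 + card A2"
    by (rule card_Un_le)
  also have "\<dots> \<le> N + n * (N * (N * Q ^ (r - 1)))"
    using A2 card_image_le[OF finite_V] unfolding A1_def N_def by (meson add_le_mono)
  also have "\<dots> \<le> N * Q ^ (r - 1) + n * (N * (N * Q ^ (r - 1)))"
    using Q by simp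
  also have "\<dots> = (N + n * N * N) * Q ^ (r - 1)"
    by (simp add: algebra_simps)
  also have "\<dots> \<le> Q * Q ^ (r - 1)"
  proof (rule mult_right_mono)
    have "N + n * N * N \<le> (N + 1) * (N + 1) * (n + 1)"
      by (simp add: algebra_simps)
    then show "N + n * N * N \<le> Q"
      unfolding Q_def by (simp add: power2_eq_square)
  qed simp
  also have "\<dots> = Q ^ r"
    using r by (metis Suc_diff_1 less_le_trans power_Suc zero_less_one)
  finally show ?case
    unfolding Q_def N_def r_def .
qed

lemma card_label_words_le:
  assumes unique_loop_labels
  shows "card (map lab ` {p. walk p \<and> length p = Suc n}) \<le> card V * ((card V + 1)^2 * (n + 1)) ^ card V"
proof -
  define Q where "Q = (card V + 1)^2 * (n + 1)"
  have "map lab ` {p. walk p \<and> length p = Suc n} \<subseteq> (\<Union>v\<in>V. walk_words v n)"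
  proof
    fix s
    assume "s \<in> map lab ` {p. walk p \<and> length p = Suc n}"
    then obtain p where "walk p" "length p = Suc n" "s = map lab p"
      by blast
    moreover have "hd p \<in> V"
      using \<open>walk p\<close> unfolding walk_def by (metis hd_in_set subsetD)
    ultimately show "s \<in> (\<Union>v\<in>V. walk_words v n)"
      unfolding walk_words_def by blast
  qed
  then have "card (map lab ` {p. walk p \<and> length p = Suc n}) \<le> card (\<Union>v\<in>V. walk_words v n)"
    using finite_V finite_walk_words by (intro card_mono) auto
  also have "\<dots> \<le> card V * Q ^ card V"
  proof (rule card_UN_le_mult[OF finite_V])
    fix v
    assume "v \<in> V"
    have "card {w. reachable v w} \<le> card V"
      using finite_V reachable_in by (intro card_mono) auto
    moreover have "Q \<ge> 1"
      unfolding Q_def by (metis mult_le_mono le_add2 nat_mult_1 One_nat_def Suc_eq_plus1 one_le_power)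
    ultimately have "Q ^ card {w. reachable v w} \<le> Q ^ card V"
      by (intro power_increasing)
    then show "card (walk_words v n) \<le> Q ^ card V"
      unfolding Q_def by (rule order_trans[OF card_walk_words_le[OF assms \<open>v \<in> V\<close>]])
  qed
  finally show ?thesis
    unfolding Q_def .
qed

end

lemma htop_pos_if_exponential_growth:
  assumes "\<gamma> > 0" "L > 0" "\<And>n. (2::real) ^ (n div L) \<le> max_sep f K n \<gamma>"
  shows "htop f K > 0"
proof -
  define c where "c = ln 2 / (2 * real L)"
  have c: "c > 0"
    unfolding c_def using assms(2) by simp
  have "eventually (\<lambda>n. ereal c \<le> ereal (ln (max_sep f K n \<gamma>) / real n)) sequentially"
  proof (rule eventually_sequentiallyI[of L])
    fix n
    assume n: "L \<le> n"
    define N where "N = n div L"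
    have "N \<ge> 1"
      unfolding N_def using n assms(2) div_le_mono[OF n, of L] by simp
    moreover have "n < N * L + L"
      unfolding N_def using assms(2) by (metis add_less_cancel_left div_mult_mod_eq mod_less_divisor)
    ultimately have "n \<le> 2 * N * L"
      using mult_le_mono1[of 1 N L] by linarith
    then have "real n \<le> real (2 * N * L)"
      by (simp only: of_nat_le_iff)
    then have "c * real n \<le> c * (2 * real N * real L)"
      using c by (simp add: mult_left_mono)
    also have "\<dots> = real N * ln 2"
      unfolding c_def using assms(2) by (simp add: field_simps)
    also have "\<dots> = ln ((2::real) ^ N)"
      by (simp add: ln_realpow)
    also have "\<dots> \<le> ln (max_sep f K n \<gamma>)"
      using assms(3)[of n] unfolding N_def by (intro ln_mono) auto
    finally show "ereal c \<le> ereal (ln (max_sep f K n \<gamma>) / real n)"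
      using n assms(2) by (simp add: field_simps)
  qed
  then have "ereal c \<le> limsup (\<lambda>n. ereal (ln (max_sep f K n \<gamma>) / real n))"
    by (rule le_Limsup[OF trivial_limit_sequentially])
  also have "\<dots> \<le> htop f K"
    unfolding htop_def using assms(1) by (intro SUP_upper) simp
  finally show ?thesis
    using c by (metis ereal_less(2) less_le_trans)
qed

section \<open>Compact dynamical systems\<close>

lemma eventually_inverse_Suc_less:
  assumes "r > 0"
  obtains J where "\<And>j. j \<ge> J \<Longrightarrow> inverse (real (Suc j)) < r"
proof -
  obtain J where J: "inverse (real (Suc J)) < r"
    using reals_Archimedean[OF assms] by blast
  have "inverse (real (Suc j)) < r" if "j \<ge> J" for j
  proof -
    have "inverse (real (Suc j)) \<le> inverse (real (Suc J))"
      using that by (intro le_imp_inverse_le) auto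
    then show ?thesis
      using J by linarith
  qed
  then show ?thesis
    using that by blast
qed

locale compact_dynamics =
  fixes f :: "'a::metric_space \<Rightarrow> 'a" and X :: "'a set"
  assumes compact_X: "compact X" and continuous_f: "continuous_on X f" and invariant: "f ` X \<subseteq> X"
begin

lemma f_in: "x \<in> X \<Longrightarrow> f x \<in> X"
  using invariant by blast

lemma funpow_in: "x \<in> X \<Longrightarrow> (f ^^ n) x \<in> X"
  by (induction n) (auto simp: f_in)

lemma closed_X: "closed X"
  using compact_X compact_imp_closed by blast

lemma uniformly_continuous_f: "uniformly_continuous_on X f"
  using compact_uniformly_continuous[OF continuous_f compact_X] .

lemma continuous_on_funpow: "continuous_on X (f ^^ n)"
proof (induction n)
  case 0
  then show ?case by (simp add: continuous_on_id)
next
  case (Suc n)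
  have "continuous_on X (f \<circ> (f ^^ n))"
    by (rule continuous_on_compose[OF Suc]) (rule continuous_on_subset[OF continuous_f], use funpow_in in blast)
  then show ?case by (simp only: funpow.simps)
qed

lemma limit_in:
  assumes "\<And>n. u n \<in> X" "u \<longlonglongrightarrow> x"
  shows "x \<in> X"
  using closed_sequentially[OF closed_X] assms by blast

lemma convergent_subseq:
  assumes "\<And>n. u n \<in> X"
  obtains r y where "\<And>n. r n \<ge> n" "y \<in> X" "(\<lambda>n. u (r n)) \<longlonglongrightarrow> y"
proof -
  obtain r y where "strict_mono r" "y \<in> X" "(u \<circ> r) \<longlonglongrightarrow> y"
    using seq_compactE[OF compact_imp_seq_compact[OF compact_X], of u] assms by blast
  then show ?thesis
    using that seq_suble by (fastforce simp: o_def)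
qed

text \<open>A \<open>\<delta>\<close>-chain from \<open>u\<close> to \<open>w\<close> that follows the orbit of \<open>y\<close> from time \<open>P + 1\<close> to \<open>Q - 1\<close>.\<close>
lemma delta_chain_along_orbit:
  assumes "u \<in> X" "w \<in> X" "y \<in> X" "P < Q"
    and "dist (f u) ((f ^^ Suc P) y) \<le> \<delta>/2" "dist ((f ^^ Q) y) w \<le> \<delta>/2"
  shows "delta_chain_rel f X \<delta> u w"
proof -
  define K where "K = Q - P"
  have K: "K > 0" "P + K = Q"
    using assms(4) unfolding K_def by auto
  have \<delta>: "\<delta> \<ge> 0"
    using assms(6) zero_le_dist[of "(f ^^ Q) y" w] by linarith
  define xs where "xs i = (if i = 0 then u else if i = K then w else (f ^^ (P + i)) y)" for i
  have "dist (f (xs i)) (xs (Suc i)) \<le> \<delta>" if i: "i < K" for i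
  proof (cases "i = 0")
    case True
    show ?thesis
    proof (cases "K = 1")
      case True
      then have "Suc P = Q"
        using K(2) by simp
      then have "dist (f u) w \<le> \<delta>"
        using assms(5,6) dist_triangle[of "f u" w "(f ^^ Q) y"] by (simp del: funpow.simps)
      then show ?thesis
        using True \<open>i = 0\<close> unfolding xs_def by simp
    next
      case False
      then show ?thesis
        using assms(5) \<delta> \<open>i = 0\<close> unfolding xs_def by simp
    qed
  next
    case False
    then have fxs: "f (xs i) = (f ^^ (P + Suc i)) y"
      using i unfolding xs_def by simp
    show ?thesis
    proof (cases "Suc i = K")
      case True
      then show ?thesis
        using fxs assms(6) K(2) \<delta> unfolding xs_def by simp
    next
      case False
      then show ?thesis
        using fxs \<delta> unfolding xs_def by simp
    qed
  qed
  moreover have "\<forall>i\<le>K. xs i \<in> X"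
    using assms(1-3) funpow_in unfolding xs_def by simp
  moreover have "xs 0 = u" "xs K = w"
    using K unfolding xs_def by simp_all
  ultimately show ?thesis
    unfolding delta_chain_rel_def using K(1) by blast
qed

lemma omega_limit_delta_chain:
  assumes y: "y \<in> X"
    and p: "\<And>n. p n \<ge> n" "(\<lambda>n. (f ^^ p n) y) \<longlonglongrightarrow> u"
    and q: "\<And>n. q n \<ge> n" "(\<lambda>n. (f ^^ q n) y) \<longlonglongrightarrow> w"
    and "\<delta> > 0"
  shows "delta_chain_rel f X \<delta> u w"
proof -
  have X: "u \<in> X" "w \<in> X"
    using limit_in[OF funpow_in[OF y] p(2)] limit_in[OF funpow_in[OF y] q(2)] .
  obtain \<rho> where \<rho>: "\<rho> > 0" "\<forall>x\<in>X. \<forall>x'\<in>X. dist x' x < \<rho> \<longrightarrow> dist (f x') (f x) < \<delta>/2"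
    using uniformly_continuous_f \<open>\<delta> > 0\<close> unfolding uniformly_continuous_on_def by (meson half_gt_zero)
  obtain n1 where n1: "dist ((f ^^ p n1) y) u < \<rho>"
    using p(2) \<rho>(1) unfolding lim_sequentially by blast
  obtain n2 where n2: "\<forall>n\<ge>n2. dist ((f ^^ q n) y) w < \<delta>/2"
    using q(2) \<open>\<delta> > 0\<close> unfolding lim_sequentially by (meson half_gt_zero)
  define n where "n = max n2 (Suc (p n1))"
  have "p n1 < q n"
    using q(1)[of n] unfolding n_def by simp
  moreover have "dist (f u) ((f ^^ Suc (p n1)) y) \<le> \<delta>/2"
    using \<rho>(2) n1 X(1) funpow_in[OF y] by (simp add: dist_commute less_imp_le)
  moreover have "dist ((f ^^ q n) y) w \<le> \<delta>/2"
    using n2 unfolding n_def by (simp add: less_imp_le)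
  ultimately show ?thesis
    using delta_chain_along_orbit X y by blast
qed

lemma omega_limit_chain_equiv:
  assumes y: "y \<in> X"
    and p: "\<And>n. p n \<ge> n" "(\<lambda>n. (f ^^ p n) y) \<longlonglongrightarrow> u"
    and q: "\<And>n. q n \<ge> n" "(\<lambda>n. (f ^^ q n) y) \<longlonglongrightarrow> w"
  shows "chain_equiv f X u w"
proof -
  have X: "u \<in> X" "w \<in> X"
    using limit_in[OF funpow_in[OF y] p(2)] limit_in[OF funpow_in[OF y] q(2)] .
  then show ?thesis
    unfolding chain_equiv_def chain_recurrent_set_def
    using omega_limit_delta_chain[OF y p p] omega_limit_delta_chain[OF y q q]
      omega_limit_delta_chain[OF y p q] omega_limit_delta_chain[OF y q p] by blast
qed

end


section \<open>Cellwise shadowing\<close>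

locale shadowing_partitions = compact_dynamics +
  fixes cell :: "nat \<Rightarrow> 'a::metric_space \<Rightarrow> 'a set"
  assumes partition: "\<And>j. clopen_partition X (cell j)"
    and refines: "\<And>j x. x \<in> X \<Longrightarrow> cell (Suc j) x \<subseteq> cell j x"
    and mesh: "\<And>j x y. x \<in> X \<Longrightarrow> y \<in> cell j x \<Longrightarrow> dist x y < inverse (real (Suc j))"
    and shadow: "\<And>j z. (\<And>i. z i \<in> X) \<Longrightarrow> (\<And>i. f (z i) \<in> cell (Suc j) (z (Suc i))) \<Longrightarrow>
      \<exists>y\<in>X. \<forall>i. (f ^^ i) y \<in> cell j (z i)"
begin

lemma cell_self: "x \<in> X \<Longrightarrow> x \<in> cell j x"
  using clopen_partitionD(1)[OF partition] .

lemma cell_in: "x \<in> X \<Longrightarrow> y \<in> cell j x \<Longrightarrow> y \<in> X"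
  using clopen_partitionD(2)[OF partition] by blast

lemma cell_eq: "x \<in> X \<Longrightarrow> y \<in> cell j x \<Longrightarrow> cell j y = cell j x"
  using clopen_partitionD(4)[OF partition] by blast

lemma cell_sym: "x \<in> X \<Longrightarrow> y \<in> cell j x \<Longrightarrow> x \<in> cell j y"
  using cell_eq cell_self by metis

lemma finite_cells: "finite (cell j ` X)"
  using partition unfolding clopen_partition_def by blast

lemma cell_mono:
  assumes "x \<in> X" "j \<le> j'" "y \<in> cell j' x"
  shows "y \<in> cell j x"
  using assms(2,3)
proof (induction j' rule: dec_induct)
  case (step n)
  then show ?case
    using refines[OF assms(1), of n] by blast
qed

lemma closed_cell: "x \<in> X \<Longrightarrow> closed (cell j x)"
  using clopen_partition_closed[OF partition _ compact_X] .

lemma cell_Lebesgue: "\<exists>\<eta>>0. \<forall>x\<in>X. \<forall>y\<in>X. dist x y < \<eta> \<longrightarrow> y \<in> cell j x"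
  using clopen_partition_Lebesgue[OF partition compact_X] .

lemma cell_eventually:
  assumes "x \<in> X" "\<And>n. u n \<in> X" "u \<longlonglongrightarrow> x"
  obtains N where "\<And>n. n \<ge> N \<Longrightarrow> u n \<in> cell j x"
proof -
  obtain T where T: "open T" "cell j x = X \<inter> T"
    using clopen_partitionD(3)[OF partition assms(1)] openin_open by (metis inf_commute)
  then have "eventually (\<lambda>n. u n \<in> T) sequentially"
    using assms(3) cell_self[OF assms(1)] topological_tendstoD by blast
  then show ?thesis
    using that assms(2) T(2) unfolding eventually_sequentially by blast
qed

lemma funpow_limit_in_cell:
  assumes "\<And>n. u n \<in> X" "u \<longlonglongrightarrow> x" "\<And>n. (f ^^ i) (u n) \<in> cell j a" "a \<in> X"
  shows "(f ^^ i) x \<in> cell j a"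
proof -
  have "(\<lambda>n. (f ^^ i) (u n)) \<longlonglongrightarrow> (f ^^ i) x"
    using continuous_on_funpow[of i] limit_in assms(1,2)
    unfolding continuous_on_sequentially comp_def by blast
  then show ?thesis
    using closed_sequentially[OF closed_cell[OF assms(4)], of "\<lambda>n. (f ^^ i) (u n)"] assms(3) by blast
qed

subsection \<open>Chains between cells\<close>

definition cell_chain :: "nat \<Rightarrow> 'a \<Rightarrow> 'a \<Rightarrow> bool" where
  "cell_chain j a b \<longleftrightarrow> (\<exists>k>0. \<exists>z. (\<forall>i\<le>k. z i \<in> X) \<and> (\<forall>i<k. f (z i) \<in> cell j (z (Suc i))) \<and>
     z 0 \<in> cell j a \<and> z k \<in> cell j b)"

definition cell_chain_equiv :: "nat \<Rightarrow> 'a \<Rightarrow> 'a \<Rightarrow> bool" where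
  "cell_chain_equiv j a b \<longleftrightarrow> cell_chain j a b \<and> cell_chain j b a"

lemma cell_chainE:
  assumes "cell_chain j a b"
  obtains k z where "k > 0" "\<forall>i\<le>k. z i \<in> X" "\<forall>i<k. f (z i) \<in> cell j (z (Suc i))"
    "z 0 \<in> cell j a" "z k \<in> cell j b"
  using assms unfolding cell_chain_def by blast

lemma cell_chain_trans:
  assumes "a \<in> X" "b \<in> X" "c \<in> X" "cell_chain j a b" "cell_chain j b c"
  shows "cell_chain j a c"
proof -
  obtain k z where z: "k > 0" "\<forall>i\<le>k. z i \<in> X" "\<forall>i<k. f (z i) \<in> cell j (z (Suc i))"
    "z 0 \<in> cell j a" "z k \<in> cell j b"
    using assms(4) by (rule cell_chainE)
  obtain l w where w: "l > 0" "\<forall>i\<le>l. w i \<in> X" "\<forall>i<l. f (w i) \<in> cell j (w (Suc i))"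
    "w 0 \<in> cell j b" "w l \<in> cell j c"
    using assms(5) by (rule cell_chainE)
  define u where "u i = (if i < k then z i else w (i - k))" for i
  have joint: "cell j (z k) = cell j (w 0)"
    using cell_eq[OF assms(2) z(5)] cell_eq[OF assms(2) w(4)] by simp
  have "f (u i) \<in> cell j (u (Suc i))" if i: "i < k + l" for i
  proof -
    consider "Suc i < k" | "Suc i = k" | "k \<le> i"
      by linarith
    then show ?thesis
    proof cases
      case 1
      then show ?thesis
        using z(3) unfolding u_def by auto
    next
      case 2
      then show ?thesis
        using z(3) joint unfolding u_def by auto
    next
      case 3
      then have "u i = w (i - k)" "u (Suc i) = w (Suc (i - k))" "i - k < l"
        using i unfolding u_def by (auto simp: Suc_diff_le)
      then show ?thesis
        using w(3) by simp
    qed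
  qed
  moreover have "\<forall>i\<le>k+l. u i \<in> X" "u 0 \<in> cell j a" "u (k + l) \<in> cell j c"
    using z(1,2,4) w(2,5) unfolding u_def by auto
  ultimately show ?thesis
    unfolding cell_chain_def using z(1) by (intro exI[of _ "k + l"]) auto
qed

lemma cell_chain_cong_left:
  assumes "a \<in> X" "a' \<in> cell j a" "cell_chain j a b"
  shows "cell_chain j a' b"
  using assms cell_eq unfolding cell_chain_def by metis

lemma cell_chain_cong_right:
  assumes "b \<in> X" "b' \<in> cell j b" "cell_chain j a b"
  shows "cell_chain j a b'"
  using assms cell_eq unfolding cell_chain_def by metis

lemma cell_chain_mono:
  assumes "cell_chain j' a b" "j \<le> j'" "a \<in> X" "b \<in> X"
  shows "cell_chain j a b"
  using assms(1)
proof (rule cell_chainE)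
  fix k z
  assume z: "k > 0" "\<forall>i\<le>k. z i \<in> X" "\<forall>i<k. f (z i) \<in> cell j' (z (Suc i))"
    "z 0 \<in> cell j' a" "z k \<in> cell j' b"
  then have "\<forall>i<k. f (z i) \<in> cell j (z (Suc i))" "z 0 \<in> cell j a" "z k \<in> cell j b"
    using cell_mono[OF _ assms(2)] assms(3,4) by auto
  then show ?thesis
    unfolding cell_chain_def using z(1,2) by blast
qed

lemma cell_chain_step: "a \<in> X \<Longrightarrow> cell_chain j a (f a)"
  unfolding cell_chain_def
  by (intro exI[of _ 1] conjI exI[of _ "\<lambda>i. if i = 0 then a else f a"]) (auto simp: cell_self f_in)

lemma cell_chain_segment:
  assumes "\<forall>i\<le>k. z i \<in> X" "\<forall>i<k. f (z i) \<in> cell j (z (Suc i))" "a < b" "b \<le> k"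
  shows "cell_chain j (z a) (z b)"
  unfolding cell_chain_def
  using assms cell_self
  by (intro exI[of _ "b - a"] conjI exI[of _ "\<lambda>i. z (a + i)"]) auto

lemma delta_chain_imp_cell_chain:
  assumes "delta_chain_rel f X \<delta> a b" "\<forall>x\<in>X. \<forall>y\<in>X. dist x y < \<eta> \<longrightarrow> y \<in> cell j x" "\<delta> < \<eta>"
  shows "cell_chain j a b"
proof -
  obtain k xs where k: "k > 0" "xs 0 = a" "xs k = b" "\<forall>i\<le>k. xs i \<in> X"
    "\<forall>i<k. dist (f (xs i)) (xs (Suc i)) \<le> \<delta>"
    using assms(1) unfolding delta_chain_rel_def by blast
  have "f (xs i) \<in> cell j (xs (Suc i))" if "i < k" for i
    using assms(2,3) k(4,5) f_in that by (auto simp: dist_commute)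
  then show ?thesis
    unfolding cell_chain_def using k cell_self by (metis le_refl less_imp_le_nat zero_le)
qed

lemma cell_chain_imp_delta_chain:
  assumes "\<delta> > 0"
  obtains J where "\<And>j a b. j \<ge> J \<Longrightarrow> a \<in> X \<Longrightarrow> b \<in> X \<Longrightarrow> cell_chain j a b \<Longrightarrow>
    delta_chain_rel f X \<delta> a b"
proof -
  obtain \<rho> where \<rho>: "\<rho> > 0" "\<forall>x\<in>X. \<forall>x'\<in>X. dist x' x < \<rho> \<longrightarrow> dist (f x') (f x) < \<delta>/2"
    using uniformly_continuous_f assms unfolding uniformly_continuous_on_def by (meson half_gt_zero)
  obtain J where J: "\<And>j. j \<ge> J \<Longrightarrow> inverse (real (Suc j)) < min \<rho> (\<delta>/2)"
    using eventually_inverse_Suc_less[of "min \<rho> (\<delta>/2)"] \<rho>(1) assms by auto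
  have "delta_chain_rel f X \<delta> a b"
    if j: "J \<le> j" and ab: "a \<in> X" "b \<in> X" and chain: "cell_chain j a b" for j a b
  proof -
    obtain k z where z: "k > 0" "\<forall>i\<le>k. z i \<in> X" "\<forall>i<k. f (z i) \<in> cell j (z (Suc i))"
      "z 0 \<in> cell j a" "z k \<in> cell j b"
      using chain by (rule cell_chainE)
    have close: "dist x y < min \<rho> (\<delta>/2)" if "x \<in> X" "y \<in> cell j x" for x y
      using mesh[OF that] J[OF j] by linarith
    define xs where "xs i = (if i = 0 then a else if i = k then b else z i)" for i
    have "dist (f (xs i)) (xs (Suc i)) \<le> \<delta>" if i: "i < k" for i
    proof -
      have "f (z i) \<in> cell j (xs (Suc i))"
        using z(3) i cell_eq[OF ab(2) z(5)] unfolding xs_def by auto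
      moreover have "xs (Suc i) \<in> X"
        using z(2) ab(2) i unfolding xs_def by simp
      ultimately have "dist (xs (Suc i)) (f (z i)) < \<delta>/2"
        using close by fastforce
      then have half: "dist (f (z i)) (xs (Suc i)) < \<delta>/2"
        by (simp add: dist_commute)
      show ?thesis
      proof (cases "i = 0")
        case True
        have "dist (f (z 0)) (f a) < \<delta>/2"
          using \<rho>(2) close[OF ab(1) z(4)] ab(1) z(2) by (simp add: dist_commute)
        then show ?thesis
          using half True dist_triangle_half_l[of "f a" "f (z 0)" \<delta> "xs (Suc i)"]
          unfolding xs_def by (simp add: dist_commute)
      next
        case False
        then have "xs i = z i"
          using i unfolding xs_def by simp
        then show ?thesis
          using half assms by simp
      qed
    qed
    moreover have "\<forall>i\<le>k. xs i \<in> X" "xs 0 = a" "xs k = b"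
      using z(1,2) ab unfolding xs_def by auto
    ultimately show ?thesis
      unfolding delta_chain_rel_def using z(1) by blast
  qed
  then show ?thesis
    using that by blast
qed

lemma chain_recurrent_iff_cell_chain:
  "x \<in> chain_recurrent_set f X \<longleftrightarrow> x \<in> X \<and> (\<forall>j. cell_chain j x x)"
proof
  assume x: "x \<in> chain_recurrent_set f X"
  have "cell_chain j x x" for j
  proof -
    obtain \<eta> where "\<eta> > 0" "\<forall>x\<in>X. \<forall>y\<in>X. dist x y < \<eta> \<longrightarrow> y \<in> cell j x"
      using cell_Lebesgue by blast
    then show ?thesis
      using x delta_chain_imp_cell_chain[of "\<eta>/2"] unfolding chain_recurrent_set_def by auto
  qed
  then show "x \<in> X \<and> (\<forall>j. cell_chain j x x)"
    using x unfolding chain_recurrent_set_def by blast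
next
  assume h: "x \<in> X \<and> (\<forall>j. cell_chain j x x)"
  have "delta_chain_rel f X \<delta> x x" if \<delta>: "\<delta> > 0" for \<delta>
  proof -
    obtain J where "\<And>j a b. j \<ge> J \<Longrightarrow> a \<in> X \<Longrightarrow> b \<in> X \<Longrightarrow> cell_chain j a b \<Longrightarrow>
        delta_chain_rel f X \<delta> a b"
      using cell_chain_imp_delta_chain[OF \<delta>] by blast
    then show ?thesis
      using h by blast
  qed
  then show "x \<in> chain_recurrent_set f X"
    using h unfolding chain_recurrent_set_def by blast
qed

lemma chain_equiv_iff_cell_chain_equiv:
  "chain_equiv f X x y \<longleftrightarrow> x \<in> X \<and> y \<in> X \<and> (\<forall>j. cell_chain_equiv j x y)"
proof
  assume h: "chain_equiv f X x y"
  have "cell_chain_equiv j x y" for j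
  proof -
    obtain \<eta> where "\<eta> > 0" "\<forall>x\<in>X. \<forall>y\<in>X. dist x y < \<eta> \<longrightarrow> y \<in> cell j x"
      using cell_Lebesgue by blast
    then show ?thesis
      using h delta_chain_imp_cell_chain[of "\<eta>/2"]
      unfolding chain_equiv_def cell_chain_equiv_def by auto
  qed
  then show "x \<in> X \<and> y \<in> X \<and> (\<forall>j. cell_chain_equiv j x y)"
    using h unfolding chain_equiv_def chain_recurrent_set_def by blast
next
  assume h: "x \<in> X \<and> y \<in> X \<and> (\<forall>j. cell_chain_equiv j x y)"
  then have "cell_chain j x x" "cell_chain j y y" for j
    using cell_chain_trans unfolding cell_chain_equiv_def by meson+
  then have "x \<in> chain_recurrent_set f X" "y \<in> chain_recurrent_set f X"
    using chain_recurrent_iff_cell_chain h by auto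
  moreover have "delta_chain_rel f X \<delta> x y \<and> delta_chain_rel f X \<delta> y x" if \<delta>: "\<delta> > 0" for \<delta>
  proof -
    obtain J where "\<And>j a b. j \<ge> J \<Longrightarrow> a \<in> X \<Longrightarrow> b \<in> X \<Longrightarrow> cell_chain j a b \<Longrightarrow>
        delta_chain_rel f X \<delta> a b"
      using cell_chain_imp_delta_chain[OF \<delta>] by blast
    then show ?thesis
      using h unfolding cell_chain_equiv_def by blast
  qed
  ultimately show "chain_equiv f X x y"
    unfolding chain_equiv_def by blast
qed

lemma chain_recurrent_cell_chain:
  "x \<in> chain_recurrent_set f X \<Longrightarrow> x \<in> X \<and> cell_chain j x x"
  using chain_recurrent_iff_cell_chain by blast

lemma chain_equiv_in: "chain_equiv f X a b \<Longrightarrow> a \<in> X \<and> b \<in> X"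
  using chain_equiv_iff_cell_chain_equiv by blast

lemma cell_chain_equiv_trans:
  "a \<in> X \<Longrightarrow> b \<in> X \<Longrightarrow> c \<in> X \<Longrightarrow> cell_chain_equiv j a b \<Longrightarrow> cell_chain_equiv j b c \<Longrightarrow>
    cell_chain_equiv j a c"
  unfolding cell_chain_equiv_def using cell_chain_trans by blast

lemma cell_chain_equiv_sym: "cell_chain_equiv j a b \<Longrightarrow> cell_chain_equiv j b a"
  unfolding cell_chain_equiv_def by blast

lemma cell_chain_equiv_refl: "cell_chain_equiv j d d \<longleftrightarrow> cell_chain j d d"
  unfolding cell_chain_equiv_def by simp

lemma cell_chain_equiv_mono:
  "cell_chain_equiv j' a b \<Longrightarrow> j \<le> j' \<Longrightarrow> a \<in> X \<Longrightarrow> b \<in> X \<Longrightarrow> cell_chain_equiv j a b"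
  unfolding cell_chain_equiv_def using cell_chain_mono by blast

lemma cell_chain_equiv_cong_right:
  "b \<in> X \<Longrightarrow> b' \<in> cell j b \<Longrightarrow> cell_chain_equiv j a b \<Longrightarrow> cell_chain_equiv j a b'"
  unfolding cell_chain_equiv_def using cell_chain_cong_left cell_chain_cong_right by blast

text \<open>Continuity of \<open>f\<close> moves the start of a fine chain from \<open>y\<close> back to \<open>f y\<close>.\<close>
lemma cell_chain_back:
  assumes "y \<in> X" "\<forall>j. cell_chain j y y"
  shows "cell_chain j (f y) y"
proof -
  obtain \<eta> where \<eta>: "\<eta> > 0" "\<forall>x\<in>X. \<forall>y\<in>X. dist x y < \<eta> \<longrightarrow> y \<in> cell j x"
    using cell_Lebesgue by blast
  obtain \<rho> where \<rho>: "\<rho> > 0" "\<forall>x\<in>X. \<forall>x'\<in>X. dist x' x < \<rho> \<longrightarrow> dist (f x') (f x) < \<eta>"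
    using uniformly_continuous_f \<eta>(1) unfolding uniformly_continuous_on_def by meson
  obtain J where J: "\<And>j'. j' \<ge> J \<Longrightarrow> inverse (real (Suc j')) < \<rho>"
    using eventually_inverse_Suc_less[OF \<rho>(1)] by blast
  define j' where "j' = max j J"
  have jj: "j \<le> j'"
    unfolding j'_def by simp
  obtain k z where z: "k > 0" "\<forall>i\<le>k. z i \<in> X" "\<forall>i<k. f (z i) \<in> cell j' (z (Suc i))"
    "z 0 \<in> cell j' y" "z k \<in> cell j' y"
    using assms(2) cell_chainE by blast
  have z1: "z 1 \<in> X"
    using z(1,2) by simp
  have "dist y (z 0) < \<rho>"
    using mesh[OF assms(1) z(4)] J[of j'] unfolding j'_def by simp
  then have "f y \<in> cell j (f (z 0))"
    using \<rho>(2) \<eta>(2) f_in assms(1) z(2) by (simp add: dist_commute)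
  moreover have "f (z 0) \<in> cell j (z 1)"
    using z(1,3) cell_mono[OF z1 jj] by simp
  ultimately have fy: "f y \<in> cell j (z 1)"
    using cell_eq[OF z1] by blast
  have zk: "z k \<in> cell j y"
    using z(5) cell_mono[OF assms(1) jj] by simp
  show ?thesis
  proof (cases "k = 1")
    case True
    then have "f y \<in> cell j y"
      using fy zk cell_eq[OF assms(1)] by blast
    then show ?thesis
      using cell_chain_cong_left[OF assms(1) _ assms(2)[rule_format, of j]] by blast
  next
    case False
    have "\<forall>i<k. f (z i) \<in> cell j (z (Suc i))"
      using z(2,3) cell_mono[OF _ jj] by auto
    then have "cell_chain j (z 1) (z k)"
      using cell_chain_segment[of k z j 1 k] z(1,2) False by simp
    then have "cell_chain j (f y) (z k)"
      using cell_chain_cong_left[OF z1] cell_sym[OF f_in[OF assms(1)]] fy cell_eq[OF z1 fy] by metis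
    then show ?thesis
      using cell_chain_cong_right[OF _ cell_sym[OF assms(1) zk]] z(1,2) by blast
  qed
qed

lemma chain_equiv_f:
  assumes "chain_equiv f X x y"
  shows "chain_equiv f X x (f y)"
proof -
  have h: "x \<in> X" "y \<in> X" "\<forall>j. cell_chain_equiv j x y"
    using assms chain_equiv_iff_cell_chain_equiv by auto
  then have "\<forall>j. cell_chain j y y"
    using cell_chain_trans unfolding cell_chain_equiv_def by meson
  then have "cell_chain_equiv j x (f y)" for j
    using cell_chain_trans[OF h(1,2) f_in[OF h(2)]] cell_chain_trans[OF f_in[OF h(2)] h(2) h(1)]
      h(3) cell_chain_step[OF h(2)] cell_chain_back[OF h(2)]
    unfolding cell_chain_equiv_def by blast
  then show ?thesis
    using chain_equiv_iff_cell_chain_equiv h f_in by blast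
qed

lemma chain_equiv_funpow: "chain_equiv f X x y \<Longrightarrow> chain_equiv f X x ((f ^^ n) y)"
  by (induction n) (auto intro: chain_equiv_f)

subsection \<open>Chain classes and universal pseudo-orbits\<close>

definition cell_shadows :: "nat \<Rightarrow> 'a \<Rightarrow> (nat \<Rightarrow> 'a) \<Rightarrow> bool" where
  "cell_shadows k y z \<longleftrightarrow> (\<forall>i. (f ^^ i) y \<in> cell k (z i))"

definition chain_class :: "nat \<Rightarrow> 'a \<Rightarrow> 'a set" where
  "chain_class m d = {x\<in>X. cell_chain_equiv m d x}"

definition cell_edge :: "'a set \<Rightarrow> 'a set \<Rightarrow> bool" where
  "cell_edge A B \<longleftrightarrow> (\<exists>x\<in>A. f x \<in> B)"

lemma cell_shadows_orbit: "x \<in> X \<Longrightarrow> cell_shadows k x (\<lambda>i. (f ^^ i) x)"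
  unfolding cell_shadows_def using cell_self funpow_in by blast

lemma cell_shadows_cong:
  assumes "cell_shadows k y z" "cell_shadows k y' (\<lambda>i. (f ^^ i) y)" "\<And>i. z i \<in> X"
  shows "cell_shadows k y' z"
  using assms cell_eq unfolding cell_shadows_def by metis

lemma cell_walk:
  assumes "\<forall>i\<le>k. z i \<in> X" "\<forall>i<k. f (z i) \<in> cell m (z (Suc i))"
  shows "successively cell_edge (map (\<lambda>i. cell m (z i)) [0..<Suc k])"
  unfolding successively_conv_nth cell_edge_def
  using assms cell_self by (auto simp del: upt_Suc)

lemma chain_class_in: "x \<in> chain_class m d \<Longrightarrow> x \<in> X"
  unfolding chain_class_def by blast

lemma chain_class_cell:
  assumes "x \<in> chain_class m d" "x' \<in> cell m x"
  shows "x' \<in> chain_class m d"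
  using assms cell_chain_equiv_cong_right cell_in unfolding chain_class_def by blast

lemma cell_chain_in_chain_class:
  assumes "d \<in> X" "x \<in> chain_class m d" "x' \<in> chain_class m d"
  shows "cell_chain m x x'"
  using assms cell_chain_trans[of x d x'] unfolding chain_class_def cell_chain_equiv_def by blast

lemma chain_class_mono:
  assumes "x \<in> chain_class (Suc j) d" "d \<in> X"
  shows "cell_chain_equiv j d x"
  using assms cell_chain_equiv_mono[of "Suc j" d x j] unfolding chain_class_def by simp

lemma chain_class_segment:
  assumes d: "d \<in> X" and x: "x \<in> chain_class m d" "x' \<in> chain_class m d"
    and z: "\<forall>i\<le>k. z i \<in> X" "\<forall>i<k. f (z i) \<in> cell m (z (Suc i))" "z 0 \<in> cell m x" "z k \<in> cell m x'"
    and "i \<le> k"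
  shows "z i \<in> chain_class m d"
proof -
  have X: "x \<in> X" "x' \<in> X" "z i \<in> X"
    using x z(1) \<open>i \<le> k\<close> chain_class_in by auto
  have "cell_chain m x (z i)"
  proof (cases "i = 0")
    case True
    then show ?thesis
      using cell_chain_cong_right[OF X(1) z(3) cell_chain_in_chain_class[OF d x(1) x(1)]] by simp
  next
    case False
    then show ?thesis
      using cell_chain_cong_left[OF z(1)[rule_format, of 0] cell_sym[OF X(1) z(3)]]
        cell_chain_segment[OF z(1,2), of 0 i] \<open>i \<le> k\<close> by simp
  qed
  moreover have "cell_chain m (z i) x'"
  proof (cases "i = k")
    case True
    then show ?thesis
      using cell_chain_cong_left[OF X(2) z(4) cell_chain_in_chain_class[OF d x(2) x(2)]] by simp
  next
    case False
    then show ?thesis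
      using cell_chain_cong_right[OF z(1)[rule_format, of k] cell_sym[OF X(2) z(4)]]
        cell_chain_segment[OF z(1,2), of i k] \<open>i \<le> k\<close> by simp
  qed
  ultimately have "cell_chain_equiv m x' (z i)"
    using cell_chain_trans[OF X(2) X(1) X(3)] cell_chain_trans[OF X(3) X(1) X(2)]
      cell_chain_in_chain_class[OF d x(2) x(1)] cell_chain_in_chain_class[OF d x(1) x(2)]
    unfolding cell_chain_equiv_def by blast
  then show ?thesis
    using x(2) X(3) cell_chain_equiv_trans[OF d X(2) X(3)] unfolding chain_class_def by blast
qed

lemma chain_class_cells_connected:
  assumes d: "d \<in> X" and AB: "A \<in> cell m ` chain_class m d" "B \<in> cell m ` chain_class m d"
  shows "\<exists>c. set c \<subseteq> cell m ` chain_class m d \<and> successively cell_edge (A # c @ [B])"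
proof -
  obtain x x' where x: "x \<in> chain_class m d" "A = cell m x" "x' \<in> chain_class m d" "B = cell m x'"
    using AB by blast
  have X: "x \<in> X" "x' \<in> X"
    using x chain_class_in by auto
  obtain k z where z: "k > 0" "\<forall>i\<le>k. z i \<in> X" "\<forall>i<k. f (z i) \<in> cell m (z (Suc i))"
    "z 0 \<in> cell m x" "z k \<in> cell m x'"
    using cell_chain_in_chain_class[OF d x(1) x(3)] by (rule cell_chainE)
  have "A # map (\<lambda>i. cell m (z i)) [1..<k] @ [B] = map (\<lambda>i. cell m (z i)) [0..<Suc k]"
    using z(1) cell_eq[OF X(1) z(4)] cell_eq[OF X(2) z(5)] x(2,4) by (simp add: upt_conv_Cons)
  moreover have "set (map (\<lambda>i. cell m (z i)) [1..<k]) \<subseteq> cell m ` chain_class m d"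
    using chain_class_segment[OF d x(1,3) z(2-5)] by auto
  ultimately show ?thesis
    using cell_walk[OF z(2,3)] by metis
qed

lemma universal_class_pseudo_orbit:
  assumes d: "d \<in> X" "cell_chain m d d"
  obtains t where "\<And>i. t i \<in> chain_class m d" "\<And>i. f (t i) \<in> cell m (t (Suc i))"
    "\<And>z n N. (\<And>i. z i \<in> chain_class m d) \<Longrightarrow> (\<And>i. f (z i) \<in> cell m (z (Suc i))) \<Longrightarrow>
      \<exists>p\<ge>N. \<forall>i\<le>n. t (p + i) \<in> cell m (z i)"
proof -
  let ?V = "cell m ` chain_class m d"
  have "finite ?V"
    by (rule finite_subset[OF _ finite_cells[of m]]) (auto simp: chain_class_def)
  moreover have "?V \<noteq> {}"
    using d cell_chain_equiv_refl unfolding chain_class_def by blast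
  ultimately obtain T where T: "\<And>i. T i \<in> ?V" "\<And>i. cell_edge (T i) (T (Suc i))"
    "\<And>w N. w \<noteq> [] \<Longrightarrow> set w \<subseteq> ?V \<Longrightarrow> successively cell_edge w \<Longrightarrow>
      \<exists>p\<ge>N. \<forall>i<length w. T (p + i) = w ! i"
    using universal_walk[of ?V cell_edge, OF _ _ chain_class_cells_connected[OF d(1)]] by blast
  define t where "t i = (SOME x. x \<in> T i \<and> f x \<in> T (Suc i))" for i
  have t: "t i \<in> T i \<and> f (t i) \<in> T (Suc i)" for i
  proof -
    have "\<exists>x. x \<in> T i \<and> f x \<in> T (Suc i)"
      using T(2)[of i] unfolding cell_edge_def by blast
    then show ?thesis
      unfolding t_def by (rule someI_ex)
  qed
  have t_class: "t i \<in> chain_class m d \<and> T i = cell m (t i)" for i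
  proof -
    obtain x where x: "x \<in> chain_class m d" "T i = cell m x"
      using T(1) by blast
    then show ?thesis
      using t[of i] chain_class_cell[OF x(1)] cell_eq[OF chain_class_in[OF x(1)]] by simp
  qed
  have "\<exists>p\<ge>N. \<forall>i\<le>n. t (p + i) \<in> cell m (z i)"
    if z: "\<And>i. z i \<in> chain_class m d" "\<And>i. f (z i) \<in> cell m (z (Suc i))" for z n N
  proof -
    define w where "w = map (\<lambda>i. cell m (z i)) [0..<Suc n]"
    have "successively cell_edge w"
      unfolding w_def using z(1)[THEN chain_class_in] z(2) by (intro cell_walk) auto
    moreover have "w \<noteq> []" "set w \<subseteq> ?V"
      unfolding w_def using z by auto
    ultimately have w: "w \<noteq> []" "set w \<subseteq> ?V" "successively cell_edge w"
      by blast+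
    obtain p where p: "p \<ge> N" "\<forall>i<length w. T (p + i) = w ! i"
      using T(3)[OF w] by blast
    have "t (p + i) \<in> cell m (z i)" if "i \<le> n" for i
    proof -
      have "T (p + i) = cell m (z i)"
        using p(2) that unfolding w_def by (simp del: upt_Suc)
      then show ?thesis
        using t[of "p + i"] by simp
    qed
    then show ?thesis
      using p(1) by blast
  qed
  then show ?thesis
    using that t t_class by metis
qed

lemma limit_of_windows_shadows:
  assumes y0: "y0 \<in> X" and z: "\<And>i. z i \<in> X"
    and windows: "\<And>n. \<exists>p\<ge>n. \<forall>i\<le>n. (f ^^ i) ((f ^^ p) y0) \<in> cell j (z i)"
  obtains q y where "\<And>n. q n \<ge> n" "(\<lambda>n. (f ^^ q n) y0) \<longlonglongrightarrow> y" "cell_shadows j y z"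
proof -
  define P where "P n = (SOME p. p \<ge> n \<and> (\<forall>i\<le>n. (f ^^ i) ((f ^^ p) y0) \<in> cell j (z i)))" for n
  have P: "P n \<ge> n \<and> (\<forall>i\<le>n. (f ^^ i) ((f ^^ P n) y0) \<in> cell j (z i))" for n
    unfolding P_def using windows[of n] by (rule someI_ex)
  obtain r y where r: "\<And>n. r n \<ge> n" "y \<in> X" "(\<lambda>n. (f ^^ P (r n)) y0) \<longlonglongrightarrow> y"
    using convergent_subseq[of "\<lambda>n. (f ^^ P n) y0"] funpow_in[OF y0] by blast
  have "(f ^^ i) y \<in> cell j (z i)" for i
  proof -
    have "(\<lambda>n. (f ^^ P (r (n + i))) y0) \<longlonglongrightarrow> y"
      using LIMSEQ_ignore_initial_segment[OF r(3), of i] by simp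
    moreover have "(f ^^ i) ((f ^^ P (r (n + i))) y0) \<in> cell j (z i)" for n
      using P[of "r (n + i)"] r(1)[of "n + i"] by simp
    ultimately show ?thesis
      by (rule funpow_limit_in_cell[OF funpow_in[OF y0] _ _ z])
  qed
  moreover have "P (r n) \<ge> n" for n
    using P[of "r n"] r(1)[of n] by linarith
  ultimately show ?thesis
    using that[of "\<lambda>n. P (r n)" y] r(3) unfolding cell_shadows_def by blast
qed

definition class_pseudo_orbit :: "nat \<Rightarrow> 'a \<Rightarrow> (nat \<Rightarrow> 'a) \<Rightarrow> bool" where
  "class_pseudo_orbit m d z \<longleftrightarrow> (\<forall>i. z i \<in> chain_class m d) \<and> (\<forall>i. f (z i) \<in> cell m (z (Suc i)))"

definition shadows_class :: "nat \<Rightarrow> 'a \<Rightarrow> 'a \<Rightarrow> bool" where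
  "shadows_class k d d' \<longleftrightarrow>
     (\<forall>z. class_pseudo_orbit (Suc k) d z \<longrightarrow> (\<exists>y. chain_equiv f X d' y \<and> cell_shadows k y z))"

definition shadows_component :: "nat \<Rightarrow> 'a \<Rightarrow> 'a \<Rightarrow> bool" where
  "shadows_component k d d' \<longleftrightarrow>
     (\<forall>y. chain_equiv f X d y \<longrightarrow> (\<exists>y'. chain_equiv f X d' y' \<and> cell_shadows k y' (\<lambda>i. (f ^^ i) y)))"

definition approximates_class :: "nat \<Rightarrow> 'a \<Rightarrow> 'a \<Rightarrow> bool" where
  "approximates_class k d d' \<longleftrightarrow>
     (\<forall>z. class_pseudo_orbit (Suc k) d z \<longrightarrow> (\<exists>z'. class_pseudo_orbit (Suc k) d' z' \<and> (\<forall>i. z' i \<in> cell k (z i))))"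

lemma class_pseudo_orbit_in: "class_pseudo_orbit m d z \<Longrightarrow> z i \<in> X"
  unfolding class_pseudo_orbit_def using chain_class_in by blast

lemma orbit_class_pseudo_orbit:
  assumes "chain_equiv f X d y"
  shows "class_pseudo_orbit m d (\<lambda>i. (f ^^ i) y)"
proof -
  have "(f ^^ i) y \<in> chain_class m d" for i
    using chain_equiv_funpow[OF assms, of i] chain_equiv_iff_cell_chain_equiv
    unfolding chain_class_def by blast
  moreover have "f ((f ^^ i) y) \<in> cell m ((f ^^ Suc i) y)" for i
    using cell_self[OF funpow_in, of y "Suc i"] chain_equiv_in[OF assms] by simp
  ultimately show ?thesis
    unfolding class_pseudo_orbit_def by blast
qed

lemma shadows_class_imp_approximates:
  assumes "shadows_class k d d'"
  shows "approximates_class k d d'"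
  unfolding approximates_class_def
proof (intro allI impI)
  fix z
  assume "class_pseudo_orbit (Suc k) d z"
  then obtain y where "chain_equiv f X d' y" "cell_shadows k y z"
    using assms unfolding shadows_class_def by blast
  then show "\<exists>z'. class_pseudo_orbit (Suc k) d' z' \<and> (\<forall>i. z' i \<in> cell k (z i))"
    using orbit_class_pseudo_orbit unfolding cell_shadows_def by blast
qed

lemma approximates_class_refl: "approximates_class k d d"
  unfolding approximates_class_def using cell_self class_pseudo_orbit_in by blast

lemma approximates_class_trans:
  assumes "approximates_class k a b" "approximates_class k b c"
  shows "approximates_class k a c"
  unfolding approximates_class_def
proof (intro allI impI)
  fix z
  assume z: "class_pseudo_orbit (Suc k) a z"
  obtain z' where z': "class_pseudo_orbit (Suc k) b z'" "\<forall>i. z' i \<in> cell k (z i)"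
    using assms(1) z unfolding approximates_class_def by blast
  obtain z'' where z'': "class_pseudo_orbit (Suc k) c z''" "\<forall>i. z'' i \<in> cell k (z' i)"
    using assms(2) z'(1) unfolding approximates_class_def by blast
  have "z'' i \<in> cell k (z i)" for i
    using z'(2) z''(2) cell_eq[OF class_pseudo_orbit_in[OF z]] by metis
  then show "\<exists>z'. class_pseudo_orbit (Suc k) c z' \<and> (\<forall>i. z' i \<in> cell k (z i))"
    using z''(1) by blast
qed

lemma approximates_shadows_class:
  assumes "approximates_class k a b" "shadows_class k b c"
  shows "shadows_class k a c"
  unfolding shadows_class_def
proof (intro allI impI)
  fix z
  assume z: "class_pseudo_orbit (Suc k) a z"
  obtain z' where z': "class_pseudo_orbit (Suc k) b z'" "\<forall>i. z' i \<in> cell k (z i)"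
    using assms(1) z unfolding approximates_class_def by blast
  obtain y where y: "chain_equiv f X c y" "cell_shadows k y z'"
    using assms(2) z'(1) unfolding shadows_class_def by blast
  have "cell_shadows k y z"
    using z'(2) y(2) cell_eq[OF class_pseudo_orbit_in[OF z]] unfolding cell_shadows_def by metis
  then show "\<exists>y. chain_equiv f X c y \<and> cell_shadows k y z"
    using y(1) by blast
qed

lemma cell_chain_equiv_approximates:
  assumes "cell_chain_equiv (Suc k) a b" "a \<in> X" "b \<in> X"
  shows "approximates_class k b a"
  unfolding approximates_class_def
proof (intro allI impI)
  fix z
  assume z: "class_pseudo_orbit (Suc k) b z"
  then have "z i \<in> chain_class (Suc k) a" for i
    using cell_chain_equiv_trans[OF assms(2,3) class_pseudo_orbit_in[OF z] assms(1)]
    unfolding class_pseudo_orbit_def chain_class_def by blast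
  then have "class_pseudo_orbit (Suc k) a z"
    using z unfolding class_pseudo_orbit_def by blast
  then show "\<exists>z'. class_pseudo_orbit (Suc k) a z' \<and> (\<forall>i. z' i \<in> cell k (z i))"
    using cell_self class_pseudo_orbit_in[OF z] by blast
qed

lemma shadows_class_imp_component:
  "shadows_class k d d' \<Longrightarrow> shadows_component k d d'"
  unfolding shadows_component_def shadows_class_def using orbit_class_pseudo_orbit by blast

lemma shadows_component_trans:
  assumes "shadows_component k a b" "shadows_component k b c"
  shows "shadows_component k a c"
  unfolding shadows_component_def
proof (intro allI impI)
  fix y
  assume y: "chain_equiv f X a y"
  obtain y' where y': "chain_equiv f X b y'" "cell_shadows k y' (\<lambda>i. (f ^^ i) y)"
    using assms(1) y unfolding shadows_component_def by blast
  obtain y'' where y'': "chain_equiv f X c y''" "cell_shadows k y'' (\<lambda>i. (f ^^ i) y')"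
    using assms(2) y'(1) unfolding shadows_component_def by blast
  show "\<exists>y'. chain_equiv f X c y' \<and> cell_shadows k y' (\<lambda>i. (f ^^ i) y)"
    using cell_shadows_cong[OF y'(2) y''(2)] funpow_in chain_equiv_in[OF y] y''(1) by blast
qed

lemma shadows_component_mono:
  "shadows_component k a b \<Longrightarrow> k' \<le> k \<Longrightarrow> shadows_component k' a b"
  using cell_mono funpow_in chain_equiv_in unfolding shadows_component_def cell_shadows_def by metis

lemma shadows_class_component_trans:
  assumes "shadows_class k a b" "shadows_component k b c"
  shows "shadows_class k a c"
  unfolding shadows_class_def
proof (intro allI impI)
  fix z
  assume z: "class_pseudo_orbit (Suc k) a z"
  obtain y where y: "chain_equiv f X b y" "cell_shadows k y z"
    using assms(1) z unfolding shadows_class_def by blast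
  obtain y' where y': "chain_equiv f X c y'" "cell_shadows k y' (\<lambda>i. (f ^^ i) y)"
    using assms(2) y(1) unfolding shadows_component_def by blast
  show "\<exists>y. chain_equiv f X c y \<and> cell_shadows k y z"
    using cell_shadows_cong[OF y(2) y'(2) class_pseudo_orbit_in[OF z]] y'(1) by blast
qed

text \<open>Shadow a universal pseudo-orbit of the chain class and take an \<open>\<omega>\<close>-limit point of the
  shadowing orbit.\<close>
lemma shadows_class_limit_point:
  assumes d: "d \<in> X" "cell_chain (Suc j) d d"
  obtains d' where "d' \<in> chain_recurrent_set f X" "cell_chain_equiv j d d'" "shadows_class j d d'"
proof -
  obtain t where t: "\<And>i. t i \<in> chain_class (Suc j) d" "\<And>i. f (t i) \<in> cell (Suc j) (t (Suc i))"
    "\<And>z n N. (\<And>i. z i \<in> chain_class (Suc j) d) \<Longrightarrow> (\<And>i. f (z i) \<in> cell (Suc j) (z (Suc i))) \<Longrightarrow>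
      \<exists>p\<ge>N. \<forall>i\<le>n. t (p + i) \<in> cell (Suc j) (z i)"
    using universal_class_pseudo_orbit[OF d] by blast
  have tX: "t i \<in> X" for i
    using t(1) chain_class_in by blast
  obtain y0 where y0: "y0 \<in> X" "\<forall>i. (f ^^ i) y0 \<in> cell j (t i)"
    using shadow[of t j] tX t(2) by blast
  obtain r d' where r: "\<And>n. r n \<ge> n" "d' \<in> X" "(\<lambda>n. (f ^^ r n) y0) \<longlonglongrightarrow> d'"
    using convergent_subseq[of "\<lambda>n. (f ^^ n) y0"] funpow_in[OF y0(1)] by blast
  have "d' \<in> chain_recurrent_set f X"
    using omega_limit_chain_equiv[OF y0(1) r(1,3) r(1,3)] unfolding chain_equiv_def by blast
  moreover have "cell_chain_equiv j d d'"
  proof -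
    obtain N where "\<And>n. n \<ge> N \<Longrightarrow> (f ^^ r n) y0 \<in> cell j d'"
      using cell_eventually[OF r(2) _ r(3)] funpow_in[OF y0(1)] by blast
    then have "(f ^^ r N) y0 \<in> cell j d'" "(f ^^ r N) y0 \<in> cell j (t (r N))"
      using y0(2) by auto
    then have "d' \<in> cell j (t (r N))"
      using cell_eq[OF tX] cell_eq[OF r(2)] cell_self[OF r(2)] by metis
    then show ?thesis
      using cell_chain_equiv_cong_right[OF tX] chain_class_mono[OF t(1) d(1)] by blast
  qed
  moreover have "shadows_class j d d'"
    unfolding shadows_class_def
  proof (intro allI impI)
    fix z
    assume "class_pseudo_orbit (Suc j) d z"
    then have z: "\<And>i. z i \<in> chain_class (Suc j) d" "\<And>i. f (z i) \<in> cell (Suc j) (z (Suc i))"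
      and zX: "\<And>i. z i \<in> X"
      unfolding class_pseudo_orbit_def using chain_class_in by blast+
    have windows: "\<exists>p\<ge>n. \<forall>i\<le>n. (f ^^ i) ((f ^^ p) y0) \<in> cell j (z i)" for n
    proof -
      obtain p where p: "p \<ge> n" "\<forall>i\<le>n. t (p + i) \<in> cell (Suc j) (z i)"
        using t(3)[of z, OF z] by blast
      have "(f ^^ i) ((f ^^ p) y0) \<in> cell j (z i)" if "i \<le> n" for i
      proof -
        have "t (p + i) \<in> cell j (z i)"
          using p(2) that cell_mono[OF zX, of j "Suc j"] by auto
        then have "cell j (t (p + i)) = cell j (z i)"
          using cell_eq[OF zX] by blast
        moreover have "(f ^^ (i + p)) y0 \<in> cell j (t (p + i))"
          using y0(2) by (simp add: add.commute)
        ultimately show ?thesis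
          by (simp add: funpow_add)
      qed
      then show ?thesis
        using p(1) by blast
    qed
    obtain q y where q: "\<And>n. q n \<ge> n" "(\<lambda>n. (f ^^ q n) y0) \<longlonglongrightarrow> y" "cell_shadows j y z"
      using limit_of_windows_shadows[OF y0(1) zX windows] by blast
    show "\<exists>y. chain_equiv f X d' y \<and> cell_shadows j y z"
      using omega_limit_chain_equiv[OF y0(1) r(1,3) q(1,2)] q(3) by blast
  qed
  ultimately show ?thesis
    using that by blast
qed

lemma shadows_class_sequence:
  assumes "d \<in> X" "cell_chain (Suc k) d d"
  obtains s where "s 0 = d" "\<And>t. s (Suc t) \<in> chain_recurrent_set f X"
    "\<And>t. cell_chain_equiv k (s t) (s (Suc t))" "\<And>t. shadows_class k (s t) (s (Suc t))"
proof -
  define P where "P a b \<longleftrightarrow> b \<in> chain_recurrent_set f X \<and> cell_chain_equiv k a b \<and> shadows_class k a b"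
    for a b
  have P: "\<exists>b. P a b" if a: "a \<in> X" "cell_chain (Suc k) a a" for a
  proof -
    obtain b where "b \<in> chain_recurrent_set f X" "cell_chain_equiv k a b" "shadows_class k a b"
      using shadows_class_limit_point[OF a] by blast
    then show ?thesis
      unfolding P_def by blast
  qed
  define s where "s = rec_nat d (\<lambda>_ a. SOME b. P a b)"
  have s_Suc: "s (Suc t) = (SOME b. P (s t) b)" for t
    unfolding s_def by simp
  have "s t \<in> X \<and> cell_chain (Suc k) (s t) (s t) \<and> P (s t) (s (Suc t))" for t
  proof (induction t)
    case 0
    have "P d (SOME b. P d b)"
      using P[OF assms] by (rule someI_ex)
    then show ?case
      using assms s_Suc[of 0] unfolding s_def by simp
  next
    case (Suc t)
    then have a: "s (Suc t) \<in> X" "cell_chain (Suc k) (s (Suc t)) (s (Suc t))"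
      using chain_recurrent_cell_chain unfolding P_def by blast+
    have "P (s (Suc t)) (SOME b. P (s (Suc t)) b)"
      using P[OF a] by (rule someI_ex)
    then show ?case
      using a s_Suc[of "Suc t"] by simp
  qed
  then show ?thesis
    using that[of s] unfolding P_def s_def by simp
qed

text \<open>Iterating limit points eventually returns to a level-\<open>k+1\<close> cell already visited; from there
  on the component shadows its own chain class.\<close>
lemma self_shadowing_step:
  assumes "d \<in> X" "cell_chain (Suc k) d d"
  obtains d' where "d' \<in> chain_recurrent_set f X" "cell_chain_equiv k d d'" "shadows_class k d d'"
    "shadows_component k d d'" "shadows_class k d' d'"
proof -
  obtain s where s: "s 0 = d" "\<And>t. s (Suc t) \<in> chain_recurrent_set f X"
    "\<And>t. cell_chain_equiv k (s t) (s (Suc t))" "\<And>t. shadows_class k (s t) (s (Suc t))"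
    using shadows_class_sequence[OF assms] by blast
  have sX: "s t \<in> X" for t
    using s(1,2) assms(1) chain_recurrent_cell_chain by (cases t) auto
  have approx: "approximates_class k (s a) (s b)" if "a \<le> b" for a b
    using that
  proof (induction b rule: dec_induct)
    case base
    then show ?case
      by (rule approximates_class_refl)
  next
    case (step n)
    then show ?case
      using approximates_class_trans shadows_class_imp_approximates[OF s(4)] by blast
  qed
  have equiv: "cell_chain_equiv k d (s t)" for t
  proof (induction t)
    case 0
    then show ?case
      using s(1) cell_chain_mono[OF assms(2) _ assms(1) assms(1), of k] cell_chain_equiv_refl by simp
  next
    case (Suc t)
    then show ?case
      using cell_chain_equiv_trans[OF assms(1) sX sX] s(3) by blast
  qed
  have component: "shadows_component k d (s (Suc t))" for t
  proof (induction t)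
    case 0
    then show ?case
      using shadows_class_imp_component[OF s(4)[of 0]] s(1) by simp
  next
    case (Suc t)
    then show ?case
      using shadows_component_trans shadows_class_imp_component[OF s(4)] by blast
  qed
  have "finite ((\<lambda>t. cell (Suc k) (s t)) ` {1..})"
    by (rule finite_subset[OF _ finite_cells[of "Suc k"]]) (use sX in blast)
  then have "\<not> inj_on (\<lambda>t. cell (Suc k) (s t)) {1..}"
    using finite_imageD infinite_Ici by blast
  then obtain t1 t2 where t: "1 \<le> t1" "t1 < t2" "cell (Suc k) (s t1) = cell (Suc k) (s t2)"
    unfolding inj_on_def by (metis atLeast_iff linorder_neqE_nat)
  have "s t1 \<in> chain_recurrent_set f X" "s t2 \<in> chain_recurrent_set f X"
    using s(2)[of "t1 - 1"] s(2)[of "t2 - 1"] t by auto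
  then have "cell_chain (Suc k) (s t1) (s t1)" "s t2 \<in> cell (Suc k) (s t1)"
    using chain_recurrent_cell_chain t(3) cell_self[OF sX] by metis+
  then have "cell_chain_equiv (Suc k) (s t1) (s t2)"
    unfolding cell_chain_equiv_def using cell_chain_cong_left[OF sX] cell_chain_cong_right[OF sX] by blast
  then have "approximates_class k (s t2) (s t1)"
    using cell_chain_equiv_approximates sX by blast
  then have "approximates_class k (s (Suc t1)) (s t1)"
    using approximates_class_trans[OF approx[of "Suc t1" t2]] t(2) by simp
  then have "shadows_class k (s (Suc t1)) (s (Suc t1))"
    using approximates_shadows_class s(4) by blast
  moreover have "shadows_class k d (s (Suc t1))"
    using approximates_shadows_class[OF approx[of 0 t1] s(4)] s(1) by simp
  ultimately show ?thesis
    using that s(2) equiv component by blast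
qed

lemma shadows_limit:
  assumes D: "\<And>n. D n \<in> X" and x: "x \<in> X" and z: "\<And>i. z i \<in> X"
    and close: "\<And>i n. i \<le> n \<Longrightarrow> cell_chain_equiv i (D n) x"
    and shadows: "\<And>n. n \<ge> n0 \<Longrightarrow> \<exists>y. chain_equiv f X (D n) y \<and> cell_shadows k y z"
  shows "\<exists>y. chain_equiv f X x y \<and> cell_shadows k y z"
proof -
  define Y where "Y n = (SOME y. chain_equiv f X (D (n + n0)) y \<and> cell_shadows k y z)" for n
  have Y: "chain_equiv f X (D (n + n0)) (Y n) \<and> cell_shadows k (Y n) z" for n
  proof -
    have "\<exists>y. chain_equiv f X (D (n + n0)) y \<and> cell_shadows k y z"
      using shadows by simp
    then show ?thesis
      unfolding Y_def by (rule someI_ex)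
  qed
  have YX: "Y n \<in> X" for n
    using Y chain_equiv_in by blast
  obtain r y where r: "\<And>n. r n \<ge> n" "y \<in> X" "(\<lambda>n. Y (r n)) \<longlonglongrightarrow> y"
    using convergent_subseq[of Y] YX by blast
  have "cell_chain_equiv i x y" for i
  proof -
    obtain M where "\<And>n. n \<ge> M \<Longrightarrow> Y (r n) \<in> cell i y"
      using cell_eventually[OF r(2) _ r(3)] YX by blast
    moreover define n where "n = r (max M i)"
    ultimately have "Y n \<in> cell i y" "i \<le> n + n0"
      using r(1)[of "max M i"] by auto
    moreover have "cell_chain_equiv i x (Y n)"
      using cell_chain_equiv_trans[OF x D YX cell_chain_equiv_sym[OF close] , of i "n + n0" n]
        Y[of n] chain_equiv_iff_cell_chain_equiv \<open>i \<le> n + n0\<close> by blast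
    ultimately show ?thesis
      using cell_chain_equiv_cong_right[OF YX cell_sym[OF r(2)]] by blast
  qed
  then have "chain_equiv f X x y"
    using chain_equiv_iff_cell_chain_equiv x r(2) by blast
  moreover have "cell_shadows k y z"
    unfolding cell_shadows_def
  proof
    fix i
    have "(f ^^ i) (Y (r n)) \<in> cell k (z i)" for n
      using Y[of "r n"] unfolding cell_shadows_def by blast
    then show "(f ^^ i) y \<in> cell k (z i)"
      using funpow_limit_in_cell[OF YX r(3) _ z] by blast
  qed
  ultimately show ?thesis
    by blast
qed

lemma self_shadowing_sequence:
  assumes "v \<in> X" "cell_chain (Suc k0) v v"
  obtains D where "\<And>n. D n \<in> chain_recurrent_set f X" "\<And>n. shadows_class k0 v (D n)"
    "\<And>n k. k0 \<le> k \<Longrightarrow> k \<le> k0 + n \<Longrightarrow> shadows_class k (D n) (D n)"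
    "\<And>n. cell_chain_equiv (k0 + Suc n) (D n) (D (Suc n))"
proof -
  define P where "P k d d' \<longleftrightarrow> d' \<in> chain_recurrent_set f X \<and> cell_chain_equiv k d d' \<and>
    shadows_class k d d' \<and> shadows_component k d d' \<and> shadows_class k d' d'" for k d d'
  define g where "g k d = (SOME d'. P k d d')" for k d
  have g: "P k d (g k d)" if d: "d \<in> X" "cell_chain (Suc k) d d" for k d
  proof -
    obtain d' where "P k d d'"
      using self_shadowing_step[OF d] unfolding P_def by blast
    then show ?thesis
      unfolding g_def by (rule someI)
  qed
  define D where "D = rec_nat (g k0 v) (\<lambda>n d. g (k0 + Suc n) d)"
  have D_Suc: "D (Suc n) = g (k0 + Suc n) (D n)" for n
    unfolding D_def by simp
  have D: "D n \<in> chain_recurrent_set f X \<and> shadows_class k0 v (D n) \<and>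
      (\<forall>k. k0 \<le> k \<and> k \<le> k0 + n \<longrightarrow> shadows_class k (D n) (D n))" for n
  proof (induction n)
    case 0
    have "P k0 v (D 0)"
      using g[OF assms] unfolding D_def by simp
    then show ?case
      unfolding P_def by (auto dest: le_antisym)
  next
    case (Suc n)
    then have Dn: "D n \<in> X" "cell_chain (Suc (k0 + Suc n)) (D n) (D n)"
      using chain_recurrent_cell_chain by blast+
    note step = g[OF Dn, folded D_Suc, unfolded P_def]
    have DX: "D (Suc n) \<in> X"
      using step chain_recurrent_cell_chain by blast
    have component: "shadows_component k (D n) (D (Suc n))" if "k \<le> k0 + Suc n" for k
      using step shadows_component_mono that by blast
    have "shadows_class k (D (Suc n)) (D (Suc n))" if k: "k0 \<le> k" "k \<le> k0 + Suc n" for k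
    proof (cases "k = k0 + Suc n")
      case True
      then show ?thesis
        using step by simp
    next
      case False
      then have "cell_chain_equiv (Suc k) (D n) (D (Suc n))"
        using step cell_chain_equiv_mono[of "k0 + Suc n" "D n" "D (Suc n)" "Suc k"] k Dn(1) DX by simp
      then have "approximates_class k (D (Suc n)) (D n)"
        using cell_chain_equiv_approximates Dn(1) DX by blast
      then have "shadows_class k (D (Suc n)) (D n)"
        using approximates_shadows_class Suc k False by simp
      then show ?thesis
        using shadows_class_component_trans component k(2) by blast
    qed
    then show ?case
      using step shadows_class_component_trans[OF _ component] Suc by auto
  qed
  moreover have "cell_chain_equiv (k0 + Suc n) (D n) (D (Suc n))" for n
    using g D chain_recurrent_cell_chain unfolding D_Suc P_def by blast
  ultimately show ?thesis
    using that by blast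
qed

text \<open>The limit of the refining sequence shadows its own chain classes at every level from
  \<open>k\<^sub>0\<close> on.\<close>
lemma self_shadowing_component:
  assumes v: "v \<in> X" "cell_chain (Suc k0) v v"
  obtains x0 where "x0 \<in> chain_recurrent_set f X" "shadows_class k0 v x0"
    "\<And>k. k \<ge> k0 \<Longrightarrow> shadows_class k x0 x0"
proof -
  obtain D where D: "\<And>n. D n \<in> chain_recurrent_set f X" "\<And>n. shadows_class k0 v (D n)"
    "\<And>n k. k0 \<le> k \<Longrightarrow> k \<le> k0 + n \<Longrightarrow> shadows_class k (D n) (D n)"
    "\<And>n. cell_chain_equiv (k0 + Suc n) (D n) (D (Suc n))"
    using self_shadowing_sequence[OF v] by blast
  have DX: "D n \<in> X" for n
    using D(1) chain_recurrent_cell_chain by blast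
  have D_equiv: "cell_chain_equiv i (D n) (D m)" if "n \<le> m" "i \<le> k0 + Suc n" for i n m
    using that(1)
  proof (induction m rule: dec_induct)
    case base
    then show ?case
      using D(1) chain_recurrent_cell_chain cell_chain_equiv_refl by blast
  next
    case (step m)
    then show ?case
      using cell_chain_equiv_trans[OF DX DX DX step(3) cell_chain_equiv_mono[OF D(4) _ DX DX]] that(2)
      by simp
  qed
  obtain r x0 where r: "\<And>n. r n \<ge> n" "x0 \<in> X" "(\<lambda>n. D (r n)) \<longlonglongrightarrow> x0"
    using convergent_subseq[of D] DX by blast
  have close: "cell_chain_equiv i (D n) x0" if "i \<le> n" for i n
  proof -
    obtain M where "\<And>n. n \<ge> M \<Longrightarrow> D (r n) \<in> cell i x0"
      using cell_eventually[OF r(2) _ r(3)] DX by blast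
    then have "x0 \<in> cell i (D (r (max M n)))"
      using cell_sym[OF r(2)] by simp
    moreover have "cell_chain_equiv i (D n) (D (r (max M n)))"
      using D_equiv r(1)[of "max M n"] that by simp
    ultimately show ?thesis
      using cell_chain_equiv_cong_right[OF DX] by blast
  qed
  have "cell_chain i x0 x0" for i
    using close[of i i] cell_chain_trans[OF r(2) DX r(2)] unfolding cell_chain_equiv_def by blast
  then have "x0 \<in> chain_recurrent_set f X"
    using chain_recurrent_iff_cell_chain r(2) by blast
  moreover have "shadows_class k0 v x0"
    unfolding shadows_class_def
  proof (intro allI impI)
    fix z
    assume z: "class_pseudo_orbit (Suc k0) v z"
    then show "\<exists>y. chain_equiv f X x0 y \<and> cell_shadows k0 y z"
      using shadows_limit[of D x0 z 0 k0, OF DX r(2) class_pseudo_orbit_in[OF z] close] D(2)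
      unfolding shadows_class_def by blast
  qed
  moreover have "shadows_class k x0 x0" if k: "k \<ge> k0" for k
    unfolding shadows_class_def
  proof (intro allI impI)
    fix z
    assume z: "class_pseudo_orbit (Suc k) x0 z"
    have "\<exists>y. chain_equiv f X (D n) y \<and> cell_shadows k y z" if n: "n \<ge> Suc k" for n
    proof -
      have "approximates_class k x0 (D n)"
        using cell_chain_equiv_approximates[OF close DX r(2)] n by blast
      then have "shadows_class k x0 (D n)"
        using approximates_shadows_class D(3)[of k n] k n by simp
      then show ?thesis
        using z unfolding shadows_class_def by blast
    qed
    then show "\<exists>y. chain_equiv f X x0 y \<and> cell_shadows k y z"
      using shadows_limit[of D x0 z "Suc k" k, OF DX r(2) class_pseudo_orbit_in[OF z] close] by blast
  qed
  ultimately show ?thesis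
    using that by blast
qed

subsection \<open>Horseshoes and entropy\<close>

text \<open>Two level-\<open>k\<^sub>0+1\<close> loops of length \<open>L\<close> based at the cell of \<open>a 0\<close> whose itineraries differ
  at level \<open>k\<^sub>0\<close>.\<close>
definition horseshoe :: "nat \<Rightarrow> (nat \<Rightarrow> 'a) \<Rightarrow> (nat \<Rightarrow> 'a) \<Rightarrow> nat \<Rightarrow> bool" where
  "horseshoe k0 a b L \<longleftrightarrow> L > 0 \<and> (\<forall>i\<le>L. a i \<in> X \<and> b i \<in> X) \<and>
    (\<forall>i<L. f (a i) \<in> cell (Suc k0) (a (Suc i)) \<and> f (b i) \<in> cell (Suc k0) (b (Suc i))) \<and>
    a L = a 0 \<and> b 0 \<in> cell (Suc k0) (a 0) \<and> b L \<in> cell (Suc k0) (a 0) \<and>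
    (\<exists>i<L. cell k0 (a i) \<noteq> cell k0 (b i))"

definition itinerary :: "nat \<Rightarrow> nat \<Rightarrow> 'a \<Rightarrow> 'a set list" where
  "itinerary k n x = map (\<lambda>i. cell k ((f ^^ i) x)) [0..<n]"

lemma inj_on_itinerary:
  assumes "inverse (real (Suc k)) < \<gamma>" "separated_set f K n \<gamma> E" "K \<subseteq> X"
  shows "inj_on (itinerary k n) E"
proof
  fix x y
  assume xy: "x \<in> E" "y \<in> E" "itinerary k n x = itinerary k n y"
  show "x = y"
  proof (rule ccontr)
    assume "x \<noteq> y"
    then obtain i where i: "i < n" "dist ((f ^^ i) x) ((f ^^ i) y) > \<gamma>"
      using assms(2) xy unfolding separated_set_def by blast
    have X: "x \<in> X" "y \<in> X"
      using assms(2,3) xy unfolding separated_set_def by auto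
    have "cell k ((f ^^ i) x) = cell k ((f ^^ i) y)"
      using xy(3) i(1) unfolding itinerary_def by (metis (no_types, lifting) add_0 diff_zero nth_map_upt)
    then have "(f ^^ i) y \<in> cell k ((f ^^ i) x)"
      using cell_self[OF funpow_in[OF X(2)]] by simp
    then have "dist ((f ^^ i) x) ((f ^^ i) y) < inverse (real (Suc k))"
      using mesh[OF funpow_in[OF X(1)]] by blast
    then show False
      using i(2) assms(1) by simp
  qed
qed

lemma card_separated_le:
  assumes "inverse (real (Suc k)) < \<gamma>" "separated_set f K n \<gamma> E" "K \<subseteq> X"
  shows "card E \<le> card (cell k ` X) ^ n"
proof -
  have "itinerary k n ` E \<subseteq> {xs. set xs \<subseteq> cell k ` X \<and> length xs = n}"
  proof
    fix s
    assume "s \<in> itinerary k n ` E"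
    then obtain x where "x \<in> X" "s = itinerary k n x"
      using assms(2,3) unfolding separated_set_def by blast
    then show "s \<in> {xs. set xs \<subseteq> cell k ` X \<and> length xs = n}"
      unfolding itinerary_def using funpow_in by auto
  qed
  then have "card (itinerary k n ` E) \<le> card {xs. set xs \<subseteq> cell k ` X \<and> length xs = n}"
    by (rule card_mono[OF finite_lists_length_eq[OF finite_cells]])
  also have "\<dots> = card (cell k ` X) ^ n"
    by (rule card_lists_length_eq[OF finite_cells])
  finally show ?thesis
    using card_image[OF inj_on_itinerary[OF assms]] by simp
qed

lemma max_sep_le:
  assumes "\<And>E. finite E \<Longrightarrow> separated_set f K n \<epsilon> E \<Longrightarrow> real (card E) \<le> B"
  shows "max_sep f K n \<epsilon> \<le> B"
  unfolding max_sep_def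
proof (rule cSup_least)
  have "separated_set f K n \<epsilon> {}"
    unfolding separated_set_def by simp
  then show "{real (card E) |E. finite E \<and> separated_set f K n \<epsilon> E} \<noteq> {}"
    by blast
qed (use assms in blast)

lemma card_le_max_sep:
  assumes "K \<subseteq> X" "\<epsilon> > 0" "finite E" "separated_set f K n \<epsilon> E"
  shows "real (card E) \<le> max_sep f K n \<epsilon>"
  unfolding max_sep_def
proof (rule cSup_upper)
  show "real (card E) \<in> {real (card E) |E. finite E \<and> separated_set f K n \<epsilon> E}"
    using assms(3,4) by blast
  obtain k where "inverse (real (Suc k)) < \<epsilon>"
    using eventually_inverse_Suc_less[OF assms(2)] by blast
  then show "bdd_above {real (card E) |E. finite E \<and> separated_set f K n \<epsilon> E}"
    unfolding bdd_above_def using card_separated_le[OF _ _ assms(1)] of_nat_le_iff by blast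
qed

lemma cell_label: "x \<in> X \<Longrightarrow> cell k (SOME y. y \<in> cell (Suc k) x) = cell k x"
  using someI[of "\<lambda>y. y \<in> cell (Suc k) x", OF cell_self] cell_mono[of x k "Suc k"] cell_eq by simp

text \<open>Without a horseshoe at level \<open>k\<^sub>0\<close>, two loops of level-\<open>k\<^sub>0+1\<close> cells of equal length from the
  same cell pass through the same level-\<open>k\<^sub>0\<close> cells.\<close>
lemma unique_loop_labels_if_no_horseshoe:
  assumes no_horseshoe: "\<And>a b L. \<not> horseshoe k0 a b L"
  shows "labelled_graph.unique_loop_labels (cell (Suc k0) ` X) cell_edge (\<lambda>A. cell k0 (SOME x. x \<in> A))"
proof -
  define m where "m = Suc k0"
  define V where "V = cell m ` X"
  define lab where "lab A = cell k0 (SOME x. x \<in> A)" for A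
  interpret g: labelled_graph V cell_edge lab
    by unfold_locales (simp add: V_def finite_cells)
  have lab_cell: "lab (cell m x) = cell k0 x" if "x \<in> X" for x
    unfolding lab_def m_def using cell_label[OF that] .
  have V_cell: "A = cell m y \<and> y \<in> X" if "A \<in> V" "y \<in> A" for A y
    using that cell_eq cell_in unfolding V_def by blast
  show ?thesis
    unfolding g.unique_loop_labels_def V_def[symmetric] m_def[symmetric] lab_def[symmetric]
  proof (intro allI impI)
    fix p q
    assume pq: "g.walk p \<and> g.walk q \<and> length p = length q \<and> hd p = hd q \<and> last p = hd p \<and> last q = hd q"
    show "map lab p = map lab q"
    proof (rule ccontr)
      assume differ: "map lab p \<noteq> map lab q"
      have p: "p \<noteq> []" "set p \<subseteq> V" "successively cell_edge p"
        and q: "q \<noteq> []" "set q \<subseteq> V" "successively cell_edge q"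
        using pq unfolding g.walk_def by auto
      define L where "L = length p - 1"
      have len: "length p = Suc L" "length q = Suc L"
        using pq p(1) q(1) unfolding L_def by auto
      obtain i where i: "i < Suc L" "lab (p ! i) \<noteq> lab (q ! i)"
        using differ len by (metis nth_equalityI length_map nth_map)
      have ends: "p ! L = p ! 0" "q ! L = p ! 0" "q ! 0 = p ! 0"
        using pq p(1) q(1) len by (metis diff_Suc_1 hd_conv_nth last_conv_nth)+
      then have iL: "i < L"
        using i by (metis less_SucE)
      then have L: "L > 0"
        by simp
      have pV: "p ! j \<in> V" and qV: "q ! j \<in> V" if "j \<le> L" for j
        using p(2) q(2) len that by (metis le_imp_less_Suc nth_mem subsetD)+
      have step: "\<exists>x. x \<in> p ! j \<and> f x \<in> p ! Suc j" "\<exists>x. x \<in> q ! j \<and> f x \<in> q ! Suc j" if "j < L" for j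
        using successively_nth[OF p(3)] successively_nth[OF q(3)] len that
        unfolding cell_edge_def by auto
      define a where "a j = (SOME x. x \<in> p ! (j mod L) \<and> f x \<in> p ! Suc (j mod L))" for j
      define b where "b j = (SOME x. x \<in> q ! (j mod L) \<and> f x \<in> q ! Suc (j mod L))" for j
      have a: "a j \<in> p ! (j mod L) \<and> f (a j) \<in> p ! Suc (j mod L)" for j
        unfolding a_def by (rule someI_ex) (use step(1)[of "j mod L"] L in simp)
      have b: "b j \<in> q ! (j mod L) \<and> f (b j) \<in> q ! Suc (j mod L)" for j
        unfolding b_def by (rule someI_ex) (use step(2)[of "j mod L"] L in simp)
      have a_cell: "cell m (a j) = p ! j \<and> a j \<in> X" if "j \<le> L" for j
      proof (cases "j = L")
        case True
        then have "a j \<in> p ! 0"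
          using a[of j] by simp
        then show ?thesis
          using V_cell[OF pV[of 0]] ends True by simp
      next
        case False
        then have "a j \<in> p ! j"
          using a[of j] that by simp
        then show ?thesis
          using V_cell[OF pV[OF that]] by simp
      qed
      have b_cell: "cell m (b j) = q ! j \<and> b j \<in> X" if "j \<le> L" for j
      proof (cases "j = L")
        case True
        then have "b j \<in> q ! 0"
          using b[of j] by simp
        then show ?thesis
          using V_cell[OF qV[of 0]] ends True by simp
      next
        case False
        then have "b j \<in> q ! j"
          using b[of j] that by simp
        then show ?thesis
          using V_cell[OF qV[OF that]] by simp
      qed
      have "horseshoe k0 a b L"
        unfolding horseshoe_def
      proof (intro conjI)
        show "\<forall>j\<le>L. a j \<in> X \<and> b j \<in> X"
          using a_cell b_cell by blast
        show "\<forall>j<L. f (a j) \<in> cell (Suc k0) (a (Suc j)) \<and> f (b j) \<in> cell (Suc k0) (b (Suc j))"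
        proof (intro allI impI conjI)
          fix j
          assume "j < L"
          then show "f (a j) \<in> cell (Suc k0) (a (Suc j))" "f (b j) \<in> cell (Suc k0) (b (Suc j))"
            using a[of j] b[of j] a_cell[of "Suc j"] b_cell[of "Suc j"] unfolding m_def by simp_all
        qed
        show "a L = a 0"
          unfolding a_def by simp
        have "cell m (b 0) = cell m (a 0)"
          using a_cell[of 0] b_cell[of 0] ends by simp
        moreover have "b 0 \<in> cell m (b 0)"
          using cell_self b_cell[of 0] by blast
        moreover have "b L = b 0"
          unfolding b_def by simp
        ultimately show "b 0 \<in> cell (Suc k0) (a 0)" "b L \<in> cell (Suc k0) (a 0)"
          unfolding m_def by simp_all
        have "lab (p ! i) = cell k0 (a i)" "lab (q ! i) = cell k0 (b i)"
          using lab_cell[of "a i"] lab_cell[of "b i"] a_cell[of i] b_cell[of i] iL by simp_all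
        then show "\<exists>j<L. cell k0 (a j) \<noteq> cell k0 (b j)"
          using i(2) iL by (intro exI[of _ i]) simp
      qed (rule L)
      then show False
        using no_horseshoe by blast
    qed
  qed
qed

lemma card_separated_le_polynomial:
  assumes no_horseshoe: "\<And>a b L. \<not> horseshoe k0 a b L" and "inverse (real (Suc k0)) < \<gamma>"
    and E: "separated_set f X n \<gamma> E" and "n \<ge> 1"
  shows "card E \<le> (card (cell (Suc k0) ` X) + 1) *
    ((card (cell (Suc k0) ` X) + 1)^2 * n) ^ card (cell (Suc k0) ` X)"
proof -
  define V where "V = cell (Suc k0) ` X"
  define lab where "lab = (\<lambda>A. cell k0 (SOME x. x \<in> A))"
  interpret g: labelled_graph V cell_edge lab
    by unfold_locales (simp add: V_def finite_cells)
  have "itinerary k0 n ` E \<subseteq> map lab ` {p. g.walk p \<and> length p = Suc (n - 1)}"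
  proof
    fix s
    assume "s \<in> itinerary k0 n ` E"
    then obtain x where x: "x \<in> X" "s = itinerary k0 n x"
      using E unfolding separated_set_def by blast
    define p where "p = map (\<lambda>i. cell (Suc k0) ((f ^^ i) x)) [0..<Suc (n - 1)]"
    have "successively cell_edge p"
      unfolding p_def using funpow_in[OF x(1)] cell_self[OF f_in[OF funpow_in[OF x(1)]]]
      by (intro cell_walk) auto
    moreover have "set p \<subseteq> V" "p \<noteq> []" "length p = Suc (n - 1)"
      unfolding p_def V_def using funpow_in[OF x(1)] by auto
    ultimately have "g.walk p" "length p = Suc (n - 1)"
      unfolding g.walk_def by blast+
    moreover have "map lab p = s"
      unfolding p_def x(2) itinerary_def lab_def using cell_label funpow_in[OF x(1)] \<open>n \<ge> 1\<close> by simp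
    ultimately show "s \<in> map lab ` {p. g.walk p \<and> length p = Suc (n - 1)}"
      by blast
  qed
  then have "card (itinerary k0 n ` E) \<le> card (map lab ` {p. g.walk p \<and> length p = Suc (n - 1)})"
    by (rule card_mono[OF g.finite_label_words])
  also have "\<dots> \<le> card V * ((card V + 1)^2 * n) ^ card V"
    using g.card_label_words_le[OF unique_loop_labels_if_no_horseshoe[OF no_horseshoe, folded V_def lab_def],
        of "n - 1"] \<open>n \<ge> 1\<close> by simp
  also have "\<dots> \<le> (card V + 1) * ((card V + 1)^2 * n) ^ card V"
    by simp
  finally show ?thesis
    using card_image[OF inj_on_itinerary[OF assms(2) E order_refl]] unfolding V_def by simp
qed

lemma limsup_ln_polynomial_le_zero:
  fixes g :: "nat \<Rightarrow> real" and C D e :: nat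
  assumes "C \<ge> 1" "D \<ge> 1" and g: "\<And>n. n \<ge> 1 \<Longrightarrow> 0 \<le> g n \<and> g n \<le> C * (D * n) ^ e"
  shows "limsup (\<lambda>n. ereal (ln (g n) / n)) \<le> 0"
proof -
  define h where "h n = (ln C + e * ln D + e * ln n) / n" for n :: nat
  have "eventually (\<lambda>n. ereal (ln (g n) / n) \<le> ereal (h n)) sequentially"
  proof (rule eventually_sequentiallyI[of 1])
    fix n :: nat
    assume n: "n \<ge> 1"
    have "1 \<le> C * (D * n) ^ e"
      using assms(1,2) n by (simp add: Suc_le_eq)
    then have "1 \<le> real C * (real D * real n) ^ e"
      by (metis of_nat_1 of_nat_le_iff of_nat_mult of_nat_power)
    then have "ln (g n) \<le> ln (C * (D * n) ^ e)"
      using g[OF n] by (cases "g n = 0") auto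
    also have "\<dots> = ln C + e * ln D + e * ln n"
      using assms(1,2) n by (simp add: ln_mult ln_realpow algebra_simps)
    finally show "ereal (ln (g n) / n) \<le> ereal (h n)"
      unfolding h_def using n by (simp add: divide_right_mono)
  qed
  then have "limsup (\<lambda>n. ereal (ln (g n) / n)) \<le> limsup (\<lambda>n. ereal (h n))"
    by (rule Limsup_mono)
  also have "\<dots> = 0"
  proof -
    have "h \<longlonglongrightarrow> 0"
      unfolding h_def by real_asymp
    then show ?thesis
      using lim_imp_Limsup[of sequentially "\<lambda>n. ereal (h n)" 0] by (simp add: zero_ereal_def)
  qed
  finally show ?thesis .
qed

lemma htop_pos_imp_horseshoe:
  assumes "htop f X > 0"
  shows "\<exists>k0 a b L. horseshoe k0 a b L"
proof (rule ccontr)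
  assume no_horseshoe: "\<nexists>k0 a b L. horseshoe k0 a b L"
  obtain \<gamma> where \<gamma>: "\<gamma> > 0" "limsup (\<lambda>n. ereal (ln (max_sep f X n \<gamma>) / real n)) > 0"
    using assms unfolding htop_def less_SUP_iff by auto
  obtain k0 where k0: "inverse (real (Suc k0)) < \<gamma>"
    using eventually_inverse_Suc_less[OF \<gamma>(1)] by blast
  define C where "C = card (cell (Suc k0) ` X) + 1"
  have bound: "0 \<le> max_sep f X n \<gamma> \<and> max_sep f X n \<gamma> \<le> real (C * (C^2 * n) ^ (C - 1))"
    if n: "n \<ge> 1" for n
  proof
    show "0 \<le> max_sep f X n \<gamma>"
      using card_le_max_sep[OF order_refl \<gamma>(1), of "{}" n] unfolding separated_set_def by simp
    have "real (card E) \<le> real (C * (C^2 * n) ^ (C - 1))"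
      if "finite E" "separated_set f X n \<gamma> E" for E
    proof -
      have "card E \<le> C * (C^2 * n) ^ (C - 1)"
        using card_separated_le_polynomial[OF _ k0 that(2) n] no_horseshoe unfolding C_def by simp
      then show ?thesis
        by (simp only: of_nat_le_iff)
    qed
    then show "max_sep f X n \<gamma> \<le> real (C * (C^2 * n) ^ (C - 1))"
      by (rule max_sep_le)
  qed
  have "limsup (\<lambda>n. ereal (ln (max_sep f X n \<gamma>) / real n)) \<le> 0"
  proof (rule limsup_ln_polynomial_le_zero[where C = C and D = "C^2" and e = "C - 1"])
    show "1 \<le> C" "1 \<le> C^2"
      unfolding C_def by simp_all
  qed (rule bound)
  then show False
    using \<gamma>(2) by simp
qed

lemma horseshoe_chain_class:
  assumes "horseshoe k0 a b L"
  shows "cell_chain (Suc k0) (a 0) (a 0)" "\<And>i. i < L \<Longrightarrow> a i \<in> chain_class (Suc k0) (a 0)"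
    "\<And>i. i < L \<Longrightarrow> b i \<in> chain_class (Suc k0) (a 0)"
proof -
  have L: "L > 0" and aX: "\<forall>i\<le>L. a i \<in> X" and bX: "\<forall>i\<le>L. b i \<in> X"
    and a: "\<forall>i<L. f (a i) \<in> cell (Suc k0) (a (Suc i))" and b: "\<forall>i<L. f (b i) \<in> cell (Suc k0) (b (Suc i))"
    and ends: "a L = a 0" "b 0 \<in> cell (Suc k0) (a 0)" "b L \<in> cell (Suc k0) (a 0)"
    using assms unfolding horseshoe_def by auto
  have v: "a 0 \<in> X"
    using aX by simp
  show loop: "cell_chain (Suc k0) (a 0) (a 0)"
    using cell_chain_segment[OF aX a L order_refl] ends(1) by simp
  have "d \<in> chain_class (Suc k0) (a 0)" if "d \<in> cell (Suc k0) (a 0)" for d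
    using chain_class_cell[OF _ that] loop v cell_chain_equiv_refl unfolding chain_class_def by blast
  then show "\<And>i. i < L \<Longrightarrow> a i \<in> chain_class (Suc k0) (a 0)"
    "\<And>i. i < L \<Longrightarrow> b i \<in> chain_class (Suc k0) (a 0)"
    using chain_class_segment[OF v _ _ aX a] chain_class_segment[OF v _ _ bX b] ends cell_self[OF v]
    by (metis less_imp_le)+
qed

text \<open>Every binary sequence selects a concatenation of the two loops of a horseshoe.\<close>
lemma horseshoe_class_pseudo_orbit:
  assumes "horseshoe k0 a b L"
  shows "class_pseudo_orbit (Suc k0) (a 0) (\<lambda>n. if s (n div L) then a (n mod L) else b (n mod L))"
    (is "class_pseudo_orbit _ _ ?z")
proof -
  have L: "L > 0" and aX: "\<forall>i\<le>L. a i \<in> X" and bX: "\<forall>i\<le>L. b i \<in> X"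
    and a: "\<forall>i<L. f (a i) \<in> cell (Suc k0) (a (Suc i))" and b: "\<forall>i<L. f (b i) \<in> cell (Suc k0) (b (Suc i))"
    and ends: "a L = a 0" "b 0 \<in> cell (Suc k0) (a 0)" "b L \<in> cell (Suc k0) (a 0)"
    using assms unfolding horseshoe_def by auto
  have v: "a 0 \<in> X"
    using aX by simp
  have "f (?z n) \<in> cell (Suc k0) (?z (Suc n))" for n
  proof (cases "Suc (n mod L) < L")
    case True
    then have "Suc n mod L = Suc (n mod L)" "Suc n div L = n div L"
      by (simp_all add: mod_Suc div_Suc)
    then show ?thesis
      using a b True by simp
  next
    case False
    then have "Suc (n mod L) = L"
      using L by (metis Suc_lessI mod_less_divisor)
    then have last: "Suc (n mod L) = L" "Suc n mod L = 0"
      by (simp_all add: mod_Suc)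
    then have "f (a (n mod L)) \<in> cell (Suc k0) (a 0)" "f (b (n mod L)) \<in> cell (Suc k0) (a 0)"
      using a b L ends cell_eq[OF v ends(3)] by (metis lessI)+
    moreover have "cell (Suc k0) (?z (Suc n)) = cell (Suc k0) (a 0)"
      using last(2) cell_eq[OF v ends(2)] by simp
    ultimately show ?thesis
      by simp
  qed
  moreover have "?z n \<in> chain_class (Suc k0) (a 0)" for n
    using horseshoe_chain_class(2,3)[OF assms] L by simp
  ultimately show ?thesis
    unfolding class_pseudo_orbit_def by blast
qed

lemma shadowing_of_self_shadowing:
  assumes "\<And>k. k \<ge> k0 \<Longrightarrow> shadows_class k x0 x0"
  shows "shadowing f {y. chain_equiv f X x0 y}"
  unfolding shadowing_def
proof (intro allI impI)
  fix \<epsilon> :: real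
  assume "\<epsilon> > 0"
  then obtain k1 where k1: "\<And>k. k \<ge> k1 \<Longrightarrow> inverse (real (Suc k)) < \<epsilon>"
    using eventually_inverse_Suc_less by blast
  define k where "k = max k0 k1"
  obtain \<eta> where \<eta>: "\<eta> > 0" "\<forall>x\<in>X. \<forall>y\<in>X. dist x y < \<eta> \<longrightarrow> y \<in> cell (Suc k) x"
    using cell_Lebesgue by blast
  show "\<exists>\<delta>>0. \<forall>xs. (\<forall>i. xs i \<in> {y. chain_equiv f X x0 y}) \<and> (\<forall>i. dist (f (xs i)) (xs (Suc i)) \<le> \<delta>) \<longrightarrow>
      (\<exists>x\<in>{y. chain_equiv f X x0 y}. \<forall>i. dist ((f ^^ i) x) (xs i) \<le> \<epsilon>)"
  proof (intro exI[of _ "\<eta>/2"] conjI allI impI)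
    fix xs
    assume xs: "(\<forall>i. xs i \<in> {y. chain_equiv f X x0 y}) \<and> (\<forall>i. dist (f (xs i)) (xs (Suc i)) \<le> \<eta>/2)"
    then have X: "xs i \<in> X" for i
      using chain_equiv_in by blast
    have "f (xs i) \<in> cell (Suc k) (xs (Suc i))" for i
    proof -
      have "dist (f (xs i)) (xs (Suc i)) \<le> \<eta>/2"
        using xs by blast
      then have "dist (xs (Suc i)) (f (xs i)) < \<eta>"
        using \<eta>(1) by (simp add: dist_commute)
      then show ?thesis
        using \<eta>(2) X f_in[OF X] by blast
    qed
    moreover have "xs i \<in> chain_class (Suc k) x0" for i
      using xs X chain_equiv_iff_cell_chain_equiv unfolding chain_class_def by blast
    moreover have "shadows_class k x0 x0"
      using assms unfolding k_def by simp
    ultimately obtain y where y: "chain_equiv f X x0 y" "cell_shadows k y xs"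
      unfolding shadows_class_def class_pseudo_orbit_def by blast
    have "dist ((f ^^ i) y) (xs i) \<le> \<epsilon>" for i
      using mesh[OF X y(2)[unfolded cell_shadows_def, rule_format, of i]] k1[of k]
      unfolding k_def by (simp add: dist_commute)
    then show "\<exists>x\<in>{y. chain_equiv f X x0 y}. \<forall>i. dist ((f ^^ i) x) (xs i) \<le> \<epsilon>"
      using y(1) by blast
  qed (use \<eta> in simp)
qed

text \<open>Points of the component shadowing the \<open>2\<^sup>N\<close> concatenations of the two loops are separated
  at the time where the loops differ at level \<open>k\<^sub>0\<close>.\<close>
lemma horseshoe_separated_sets:
  assumes hs: "horseshoe k0 a b L" and shadows: "shadows_class k0 (a 0) x0"
  shows "\<exists>\<gamma>>0. \<forall>N. \<exists>E. finite E \<and> card E = 2 ^ N \<and>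
    (\<forall>n\<ge>N * L. separated_set f {y. chain_equiv f X x0 y} n \<gamma> E)"
proof -
  have L: "L > 0" and aX: "\<forall>i\<le>L. a i \<in> X" and bX: "\<forall>i\<le>L. b i \<in> X"
    using hs unfolding horseshoe_def by auto
  obtain i0 where i0: "i0 < L" "cell k0 (a i0) \<noteq> cell k0 (b i0)"
    using hs unfolding horseshoe_def by blast
  obtain \<eta> where \<eta>: "\<eta> > 0" "\<forall>x\<in>X. \<forall>y\<in>X. dist x y < \<eta> \<longrightarrow> y \<in> cell k0 x"
    using cell_Lebesgue by blast
  define z where "z s n = (if s (n div L) then a (n mod L) else b (n mod L))" for s :: "nat \<Rightarrow> bool" and n
  have zX: "z s n \<in> X" for s n
    unfolding z_def using aX bX L by simp
  define Y where "Y s = (SOME y. chain_equiv f X x0 y \<and> cell_shadows k0 y (z s))" for s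
  have Y: "chain_equiv f X x0 (Y s) \<and> cell_shadows k0 (Y s) (z s)" for s
  proof -
    have "\<exists>y. chain_equiv f X x0 y \<and> cell_shadows k0 y (z s)"
      using shadows horseshoe_class_pseudo_orbit[OF hs] unfolding shadows_class_def z_def by blast
    then show ?thesis
      unfolding Y_def by (rule someI_ex)
  qed
  have YX: "Y s \<in> X" for s
    using Y chain_equiv_in by blast
  define word where "word w l = (l < length w \<and> w ! l)" for w :: "bool list" and l
  have separated: "dist ((f ^^ (l * L + i0)) (Y (word w))) ((f ^^ (l * L + i0)) (Y (word w'))) > \<eta>/2"
    if "l < length w" "l < length w'" "w ! l \<noteq> w' ! l" for w w' l
  proof (rule ccontr)
    define t where "t = l * L + i0"
    assume "\<not> ?thesis"
    then have "dist ((f ^^ t) (Y (word w))) ((f ^^ t) (Y (word w'))) < \<eta>"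
      using \<eta>(1) unfolding t_def by simp
    then have "(f ^^ t) (Y (word w')) \<in> cell k0 ((f ^^ t) (Y (word w)))"
      using \<eta>(2) funpow_in YX by blast
    moreover have "(f ^^ t) (Y s) \<in> cell k0 (z s t)" for s
      using Y unfolding cell_shadows_def by blast
    ultimately have "cell k0 (z (word w) t) = cell k0 (z (word w') t)"
      using cell_eq[OF zX] cell_eq[OF funpow_in[OF YX]] by metis
    moreover have "t div L = l" "t mod L = i0"
      unfolding t_def using i0(1) by auto
    then have "{z (word w) t, z (word w') t} = {a i0, b i0}"
      unfolding z_def word_def using that by auto
    ultimately have "cell k0 (a i0) = cell k0 (b i0)"
      by (auto simp: doubleton_eq_iff)
    then show False
      using i0(2) by simp
  qed
  have sets: "\<exists>E. finite E \<and> card E = 2 ^ N \<and> (\<forall>n\<ge>N * L. separated_set f {y. chain_equiv f X x0 y} n (\<eta>/2) E)"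
    for N
  proof (intro exI conjI allI impI)
    let ?W = "{w. set w \<subseteq> (UNIV :: bool set) \<and> length w = N}"
    show "finite ((\<lambda>w. Y (word w)) ` ?W)"
      using finite_lists_length_eq[of "UNIV :: bool set" N] by simp
    have "inj_on (\<lambda>w. Y (word w)) ?W"
    proof
      fix w w'
      assume "w \<in> ?W" "w' \<in> ?W" "Y (word w) = Y (word w')"
      then show "w = w'"
        using separated[of _ w w'] \<eta>(1) by (auto intro!: nth_equalityI)
    qed
    then show "card ((\<lambda>w. Y (word w)) ` ?W) = 2 ^ N"
      using card_lists_length_eq[of "UNIV :: bool set" N] by (simp add: card_image)
    fix n
    assume n: "n \<ge> N * L"
    show "separated_set f {y. chain_equiv f X x0 y} n (\<eta>/2) ((\<lambda>w. Y (word w)) ` ?W)"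
      unfolding separated_set_def
    proof (intro conjI ballI impI)
      show "(\<lambda>w. Y (word w)) ` ?W \<subseteq> {y. chain_equiv f X x0 y}"
        using Y by blast
      fix x y
      assume "x \<in> (\<lambda>w. Y (word w)) ` ?W" "y \<in> (\<lambda>w. Y (word w)) ` ?W" "x \<noteq> y"
      then obtain w w' where w: "length w = N" "length w' = N" "x = Y (word w)" "y = Y (word w')" "w \<noteq> w'"
        by blast
      then have "\<not> (\<forall>l<N. w ! l = w' ! l)"
        using nth_equalityI[of w w'] by auto
      then obtain l where l: "l < N" "w ! l \<noteq> w' ! l"
        by blast
      have "l * L + i0 < Suc l * L"
        using i0(1) by simp
      also have "\<dots> \<le> n"
        using l(1) n by (meson Suc_leI le_trans mult_le_mono1)
      finally show "\<exists>i<n. dist ((f ^^ i) x) ((f ^^ i) y) > \<eta>/2"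
        using separated[of l w w'] w l by auto
    qed
  qed
  show ?thesis
  proof (intro exI[of _ "\<eta>/2"] conjI allI)
    show "\<eta>/2 > 0"
      using \<eta>(1) by simp
  qed (rule sets)
qed

lemma htop_pos_component:
  assumes hs: "horseshoe k0 a b L" and shadows: "shadows_class k0 (a 0) x0"
  shows "htop f {y. chain_equiv f X x0 y} > 0"
proof -
  obtain \<gamma> where \<gamma>: "\<gamma> > 0" and sets: "\<forall>N. \<exists>E. finite E \<and> card E = 2 ^ N \<and>
      (\<forall>n\<ge>N * L. separated_set f {y. chain_equiv f X x0 y} n \<gamma> E)"
    using horseshoe_separated_sets[OF assms] by blast
  have component: "{y. chain_equiv f X x0 y} \<subseteq> X"
    using chain_equiv_in by blast
  have L: "L > 0"
    using hs unfolding horseshoe_def by blast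
  have "(2::real) ^ (n div L) \<le> max_sep f {y. chain_equiv f X x0 y} n \<gamma>" for n
  proof -
    obtain E where E: "finite E" "card E = 2 ^ (n div L)"
      "\<forall>n'\<ge>n div L * L. separated_set f {y. chain_equiv f X x0 y} n' \<gamma> E"
      using sets by blast
    have "real (card E) \<le> max_sep f {y. chain_equiv f X x0 y} n \<gamma>"
      using card_le_max_sep[OF component \<gamma> E(1)] E(3) div_times_less_eq_dividend by blast
    then show ?thesis
      using E(2) by simp
  qed
  then show ?thesis
    by (rule htop_pos_if_exponential_growth[OF \<gamma> L])
qed

end

context compact_dynamics
begin

lemma shadowing_refinement:
  assumes "shadowing f X" "zero_dimensional X" "clopen_partition X c" "e > 0"
  obtains c' where "clopen_partition X c'" "\<And>x. x \<in> X \<Longrightarrow> c' x \<subseteq> c x"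
    "\<And>x y. x \<in> X \<Longrightarrow> y \<in> c' x \<Longrightarrow> dist x y < e"
    "\<And>z. (\<And>i. z i \<in> X) \<Longrightarrow> (\<And>i. f (z i) \<in> c' (z (Suc i))) \<Longrightarrow> \<exists>y\<in>X. \<forall>i. (f ^^ i) y \<in> c (z i)"
proof -
  obtain \<eta> where \<eta>: "\<eta> > 0" "\<forall>x\<in>X. \<forall>y\<in>X. dist x y < \<eta> \<longrightarrow> y \<in> c x"
    using clopen_partition_Lebesgue[OF assms(3) compact_X] by blast
  have "\<eta>/2 > 0"
    using \<eta>(1) by simp
  then obtain \<delta> where \<delta>: "\<delta> > 0" "\<forall>xs. (\<forall>i. xs i \<in> X) \<and> (\<forall>i. dist (f (xs i)) (xs (Suc i)) \<le> \<delta>) \<longrightarrow>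
      (\<exists>x\<in>X. \<forall>i. dist ((f ^^ i) x) (xs i) \<le> \<eta>/2)"
    using assms(1) unfolding shadowing_def by blast
  have "min \<delta> e > 0"
    using \<delta>(1) assms(4) by simp
  then obtain q where q: "clopen_partition X q" "\<And>x y. x \<in> X \<Longrightarrow> y \<in> q x \<Longrightarrow> dist x y < min \<delta> e"
    using zero_dimensional_fine_clopen_partition[OF compact_X assms(2)] by blast
  have "\<exists>y\<in>X. \<forall>i. (f ^^ i) y \<in> c (z i)"
    if z: "\<And>i. z i \<in> X" "\<And>i. f (z i) \<in> c (z (Suc i)) \<inter> q (z (Suc i))" for z
  proof -
    have "dist (z (Suc i)) (f (z i)) < min \<delta> e" for i
      using q(2)[OF z(1)] z(2) by blast
    then have "dist (f (z i)) (z (Suc i)) \<le> \<delta>" for i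
      by (simp add: dist_commute less_imp_le)
    then obtain x where x: "x \<in> X" "\<forall>i. dist ((f ^^ i) x) (z i) \<le> \<eta>/2"
      using \<delta>(2) z(1) by blast
    have "(f ^^ i) x \<in> c (z i)" for i
    proof -
      have "dist ((f ^^ i) x) (z i) \<le> \<eta>/2"
        using x(2) by blast
      then have "dist (z i) ((f ^^ i) x) < \<eta>"
        using \<eta>(1) by (simp add: dist_commute)
      then show ?thesis
        using \<eta>(2) z(1) funpow_in[OF x(1)] by blast
    qed
    then show ?thesis
      using x(1) by blast
  qed
  moreover have "dist x y < e" if "x \<in> X" "y \<in> c x \<inter> q x" for x y
    using q(2)[of x y] that by simp
  ultimately show ?thesis
    using that[of "\<lambda>x. c x \<inter> q x"] clopen_partition_Int[OF assms(3) q(1)] by blast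
qed

lemma shadowing_partitions_exist:
  assumes "shadowing f X" "zero_dimensional X"
  obtains cell where "shadowing_partitions f X cell"
proof -
  define R where "R j c c' \<longleftrightarrow> clopen_partition X c' \<and> (\<forall>x\<in>X. c' x \<subseteq> c x) \<and>
    (\<forall>x\<in>X. \<forall>y\<in>c' x. dist x y < inverse (real (Suc (Suc j)))) \<and>
    (\<forall>z. (\<forall>i. z i \<in> X) \<and> (\<forall>i. f (z i) \<in> c' (z (Suc i))) \<longrightarrow> (\<exists>y\<in>X. \<forall>i. (f ^^ i) y \<in> c (z i)))"
    for j c c'
  have R: "\<exists>c'. R j c c'" if c: "clopen_partition X c" for j c
  proof -
    obtain c' where "clopen_partition X c'" "\<And>x. x \<in> X \<Longrightarrow> c' x \<subseteq> c x"
      "\<And>x y. x \<in> X \<Longrightarrow> y \<in> c' x \<Longrightarrow> dist x y < inverse (real (Suc (Suc j)))"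
      "\<And>z. (\<And>i. z i \<in> X) \<Longrightarrow> (\<And>i. f (z i) \<in> c' (z (Suc i))) \<Longrightarrow> \<exists>y\<in>X. \<forall>i. (f ^^ i) y \<in> c (z i)"
      using shadowing_refinement[OF assms c, of "inverse (real (Suc (Suc j)))"] by auto
    then show ?thesis
      unfolding R_def by blast
  qed
  obtain c0 where c0: "clopen_partition X c0" "\<And>x y. x \<in> X \<Longrightarrow> y \<in> c0 x \<Longrightarrow> dist x y < 1"
    using zero_dimensional_fine_clopen_partition[OF compact_X assms(2), of 1] by auto
  define cell where "cell = rec_nat c0 (\<lambda>j c. SOME c'. R j c c')"
  have cell_Suc: "cell (Suc j) = (SOME c'. R j (cell j) c')" for j
    unfolding cell_def by simp
  have cell: "clopen_partition X (cell j) \<and> R j (cell j) (cell (Suc j))" for j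
  proof (induction j)
    case 0
    have "R 0 c0 (SOME c'. R 0 c0 c')"
      using R[OF c0(1)] by (rule someI_ex)
    then show ?case
      using c0(1) cell_Suc[of 0] unfolding cell_def by simp
  next
    case (Suc j)
    then have "clopen_partition X (cell (Suc j))"
      unfolding R_def by blast
    moreover have "R (Suc j) (cell (Suc j)) (SOME c'. R (Suc j) (cell (Suc j)) c')"
      using R[OF calculation] by (rule someI_ex)
    ultimately show ?case
      using cell_Suc[of "Suc j"] by simp
  qed
  have "shadowing_partitions f X cell"
  proof unfold_locales
    show "clopen_partition X (cell j)" for j
      using cell by blast
    show "cell (Suc j) x \<subseteq> cell j x" if "x \<in> X" for j x
      using cell[of j] that unfolding R_def by blast
    show "dist x y < inverse (real (Suc j))" if "x \<in> X" "y \<in> cell j x" for j x y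
    proof (cases j)
      case 0
      then show ?thesis
        using c0(2) that unfolding cell_def by simp
    next
      case (Suc j')
      then show ?thesis
        using cell[of j'] that unfolding R_def by blast
    qed
    show "\<exists>y\<in>X. \<forall>i. (f ^^ i) y \<in> cell j (z i)"
      if "\<And>i. z i \<in> X" "\<And>i. f (z i) \<in> cell (Suc j) (z (Suc i))" for j z
      using cell[of j] that unfolding R_def by blast
  qed
  then show ?thesis
    using that by blast
qed

end

theorem lemma4p1:
  fixes f :: "'a::metric_space \<Rightarrow> 'a" and X :: "'a set"
  assumes "compact X"
    and "continuous_on X f"
    and "f ` X \<subseteq> X"
    and "shadowing f X"
    and "zero_dimensional X"
    and "htop f X > 0"
  shows "\<exists>C \<in> chain_components f X. shadowing f C \<and> htop f C > 0"
proof -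
  interpret compact_dynamics f X
    using assms(1-3) by unfold_locales
  obtain cell where "shadowing_partitions f X cell"
    using shadowing_partitions_exist[OF assms(4,5)] by blast
  then interpret shadowing_partitions f X cell .
  obtain k0 a b L where horseshoe: "horseshoe k0 a b L"
    using htop_pos_imp_horseshoe[OF assms(6)] by blast
  then have "a 0 \<in> X"
    unfolding horseshoe_def by blast
  obtain x0 where x0: "x0 \<in> chain_recurrent_set f X" "shadows_class k0 (a 0) x0"
    "\<And>k. k \<ge> k0 \<Longrightarrow> shadows_class k x0 x0"
    using self_shadowing_component[OF \<open>a 0 \<in> X\<close> horseshoe_chain_class(1)[OF horseshoe]] by blast
  have "{y. chain_equiv f X x0 y} \<in> chain_components f X"
    unfolding chain_components_def using x0(1) by blast
  then show ?thesis
    using shadowing_of_self_shadowing[OF x0(3)] htop_pos_component[OF horseshoe x0(2)] by blast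
qed

end
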